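(* Let $d_1,d_2\in\mathbb{N}$ with $2\leq d_1\leq d_2$. Let $\omega_d$ denote the maximally entangled projector on $\mathbb{C}^d\otimes\mathbb{C}^d$ and define on $\mathbb{C}^{d_1}\otimes\mathbb{C}^{d_1}\otimes\mathbb{C}^{d_2}\otimes\mathbb{C}^{d_2}$ (factors labelled $A_1,B_1,A_2,B_2$) \[ Z = (\mathbb{1}-\omega_{d_1})_{A_1B_1}\otimes(\mathbb{1}-\omega_{d_2})_{A_2B_2} + (d_1-1)(d_2+1)\,(\omega_{d_1})_{A_1B_1}\otimes(\omega_{d_2})_{A_2B_2}. \] With respect to the bipartition $A=A_1A_2$, $B=B_1B_2$, $Z$ is positive semidefinite and PPT, its partial transpose $Z^\Gamma$ (transposition on $B_1B_2$) satisfies $\mathrm{SN}(Z^\Gamma)\leq 4$, and hence \[ \mathrm{SN}(Z)-\mathrm{SN}(Z^\Gamma)\geq\lceil d_2/d_1\rceil - 4. \]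
   Context: $\omega_d=\ket{\Omega_d}\bra{\Omega_d}$, $\ket{\Omega_d}=\frac{1}{\sqrt d}\sum_{i=1}^d\ket{i}\otimes\ket{i}$. PPT means the partial transpose (transposition in the computational basis on the $B$ system) is positive semidefinite. The Schmidt rank of $\ket{\psi}\in\mathbb{C}^{d_A}\otimes\mathbb{C}^{d_B}$ is the rank of $\mathrm{tr}_A\ket{\psi}\bra{\psi}$; for a nonzero positive semidefinite $\rho$, $\mathrm{SN}(\rho)$ is the minimum over decompositions $\rho=\sum_ip_i\ket{\psi_i}\bra{\psi_i}$ ($p_i>0$) of the maximal Schmidt rank of the $\ket{\psi_i}$, computed with respect to the bipartition $A:B$. *)

theory Defs
  imports "Jordan_Normal_Form.DL_Rank" "Jordan_Normal_Form.Conjugate" Complex_Main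
begin

text \<open>Conventions. A bipartite system C^dA (x) C^dB is represented by vectors/matrices of
  dimension dA*dB; the product basis vector |a>|b> has global index a*dB + b.\<close>

definition ketbra :: "complex vec \<Rightarrow> complex vec \<Rightarrow> complex mat" where
  "ketbra v w = mat (dim_vec v) (dim_vec w) (\<lambda>(i,j). v $ i * cnj (w $ j))"

definition psd :: "nat \<Rightarrow> complex mat \<Rightarrow> bool" where
  "psd n A \<longleftrightarrow> A \<in> carrier_mat n n \<and>
     (\<forall>v \<in> carrier_vec n. Im (conjugate v \<bullet> (A *\<^sub>v v)) = 0 \<and> Re (conjugate v \<bullet> (A *\<^sub>v v)) \<ge> 0)"

text \<open>Partial transpose (transposition in the computational basis of B):
  rho^Gamma[(a,b),(a',b')] = rho[(a,b'),(a',b)].\<close>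
definition partial_transpose :: "nat \<Rightarrow> nat \<Rightarrow> complex mat \<Rightarrow> complex mat" where
  "partial_transpose dA dB M = mat (dA*dB) (dA*dB)
     (\<lambda>(i,j). M $$ ((i div dB) * dB + j mod dB, (j div dB) * dB + i mod dB))"

definition PPT :: "nat \<Rightarrow> nat \<Rightarrow> complex mat \<Rightarrow> bool" where
  "PPT dA dB M \<longleftrightarrow> psd (dA*dB) (partial_transpose dA dB M)"

definition ptrace_A :: "nat \<Rightarrow> nat \<Rightarrow> complex mat \<Rightarrow> complex mat" where
  "ptrace_A dA dB M = mat dB dB (\<lambda>(b,b'). \<Sum>a<dA. M $$ (a*dB + b, a*dB + b'))"

definition schmidt_rank :: "nat \<Rightarrow> nat \<Rightarrow> complex vec \<Rightarrow> nat" where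
  "schmidt_rank dA dB psi = vec_space.rank dB (ptrace_A dA dB (ketbra psi psi))"

definition mixture :: "nat \<Rightarrow> (real \<times> complex vec) list \<Rightarrow> complex mat" where
  "mixture n ps = foldr (\<lambda>(p,psi) acc. complex_of_real p \<cdot>\<^sub>m ketbra psi psi + acc) ps (0\<^sub>m n n)"

definition SN :: "nat \<Rightarrow> nat \<Rightarrow> complex mat \<Rightarrow> nat" where
  "SN dA dB rho = (LEAST k. \<exists>ps. rho = mixture (dA*dB) ps \<and>
      (\<forall>(p,psi) \<in> set ps. p > 0 \<and> psi \<in> carrier_vec (dA*dB) \<and> schmidt_rank dA dB psi \<le> k))"

definition Omega_vec :: "nat \<Rightarrow> complex vec" where
  "Omega_vec d = vec (d*d) (\<lambda>i. if i div d = i mod d then complex_of_real (1 / sqrt (real d)) else 0)"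

definition omega :: "nat \<Rightarrow> complex mat" where
  "omega d = ketbra (Omega_vec d) (Omega_vec d)"

text \<open>Four-party system A1 B1 A2 B2 with dims d1,d1,d2,d2, written in the bipartition
  A = A1A2 (index a = a1*d2 + a2), B = B1B2 (index b = b1*d2 + b2); global index a*(d1*d2) + b.
  idx1 gives the A1B1 index a1*d1 + b1, idx2 the A2B2 index a2*d2 + b2.\<close>
definition idx1 :: "nat \<Rightarrow> nat \<Rightarrow> nat \<Rightarrow> nat" where
  "idx1 d1 d2 i = ((i div (d1*d2)) div d2) * d1 + (i mod (d1*d2)) div d2"

definition idx2 :: "nat \<Rightarrow> nat \<Rightarrow> nat \<Rightarrow> nat" where
  "idx2 d1 d2 i = ((i div (d1*d2)) mod d2) * d2 + (i mod (d1*d2)) mod d2"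

text \<open>X_{A1B1} (x) Y_{A2B2}, as a matrix in the A1A2 : B1B2 ordering.\<close>
definition tensor12 :: "nat \<Rightarrow> nat \<Rightarrow> complex mat \<Rightarrow> complex mat \<Rightarrow> complex mat" where
  "tensor12 d1 d2 X Y = mat ((d1*d2)*(d1*d2)) ((d1*d2)*(d1*d2))
     (\<lambda>(i,j). X $$ (idx1 d1 d2 i, idx1 d1 d2 j) * Y $$ (idx2 d1 d2 i, idx2 d1 d2 j))"

definition Zop :: "nat \<Rightarrow> nat \<Rightarrow> complex mat" where
  "Zop d1 d2 = tensor12 d1 d2 (1\<^sub>m (d1*d1) - omega d1) (1\<^sub>m (d2*d2) - omega d2)
     + complex_of_real ((real d1 - 1) * (real d2 + 1)) \<cdot>\<^sub>m tensor12 d1 d2 (omega d1) (omega d2)"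

end

theory Submission
  imports Defs
begin

(*
  Z is positive semidefinite because 1 - \<omega>_d is the mixture of the columns (1 - \<omega>_d) e_z of this
  projector, so Z is a nonnegative mixture of tensor products of pure states.

  The partial transpose maps \<omega>_d to F/d, where F is the swap of the two factors. Writing 1 = S + A and
  F = S - A with the symmetric and antisymmetric projectors S, A, the partial transpose of Z becomes a
  nonnegative combination of S \<otimes> S, A \<otimes> S and A \<otimes> A. These are mixtures of tensor products of the
  vectors e_z \<plusminus> e_(swap z), which have Schmidt rank at most 2, so the products have Schmidt rank at most 4.

  For the lower bound, \<Omega>_d1 \<otimes> x lies in the kernel of Z whenever x is orthogonal to \<Omega>_d2, while
  \<Omega>_d1 \<otimes> \<Omega>_d2 does not. So in every decomposition of Z some pure state \<psi> has a contraction with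
  \<Omega>_d1 on A1B1 that is a nonzero multiple of \<Omega>_d2. This contraction is a sum of d1 slices of \<psi>, each
  of Schmidt rank at most that of \<psi>, hence d2 \<le> d1 * SR(\<psi>) \<le> d1 * SN(Z).
*)

lemma mult_unit_vec_eq_col:
  fixes A :: "'a::semiring_1 mat"
  assumes "A \<in> carrier_mat nr nc" "j < nc"
  shows "A *\<^sub>v unit_vec nc j = col A j"
  using assms by (intro eq_vecI) (auto dest: carrier_matD)

lemma (in vec_space) maximal_indpt_subset_of_cols_exists:
  obtains S where "maximal S (\<lambda>T. T \<subseteq> set (cols A) \<and> lin_indpt T)"
  using maximal_exists[of "\<lambda>T. T \<subseteq> set (cols A) \<and> lin_indpt T" "card (set (cols A))" "{}"]
  by (meson List.finite_set card_mono empty_iff empty_subsetI finite_lin_indpt2 rev_finite_subset)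

lemma (in vec_space) rank_le_of_cols_subset:
  assumes A: "A \<in> carrier_mat n m1" and B: "B \<in> carrier_mat n m2"
    and sub: "set (cols A) \<subseteq> set (cols B)"
  shows "rank A \<le> rank B"
proof -
  obtain S where S: "maximal S (\<lambda>T. T \<subseteq> set (cols A) \<and> lin_indpt T)"
    by (rule maximal_indpt_subset_of_cols_exists)
  hence "rank A = card S" using rank_card_indpt A by blast
  moreover have "S \<subseteq> set (cols B)" "lin_indpt S" using S sub unfolding maximal_def by auto
  ultimately show ?thesis using rank_ge_card_indpt[OF B] by auto
qed

lemma (in vec_space) kernel_trivial_of_lin_indpt_cols:
  assumes A: "A \<in> carrier_mat n m" and dist: "distinct (cols A)"
    and indpt: "lin_indpt (set (cols A))"
    and v: "v \<in> carrier_vec m" "A *\<^sub>v v = 0\<^sub>v n"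
  shows "v = 0\<^sub>v m"
  using lin_depI[OF A v(1) _ v(2) dist] indpt by blast

lemma (in vec_space) lin_indpt_cols_of_kernel_trivial:
  assumes A: "A \<in> carrier_mat n m"
    and ker: "\<And>v. v \<in> carrier_vec m \<Longrightarrow> A *\<^sub>v v = 0\<^sub>v n \<Longrightarrow> v = 0\<^sub>v m"
  shows "distinct (cols A) \<and> lin_indpt (set (cols A))"
proof
  show dist: "distinct (cols A)"
  proof (rule ccontr)
    assume "\<not> distinct (cols A)"
    then obtain i j where ij: "i \<noteq> j" "i < m" "j < m" "col A i = col A j"
      using A by (metis cols_length cols_nth distinct_conv_nth carrier_matD(2))
    have "A *\<^sub>v (unit_vec m i - unit_vec m j) = col A i - col A j"
      using A ij by (simp add: mult_minus_distrib_mat_vec mult_unit_vec_eq_col)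
    also have "\<dots> = 0\<^sub>v n" using A ij by (simp add: minus_cancel_vec[of _ n])
    finally have "unit_vec m i - unit_vec m j = (0\<^sub>v m :: 'a vec)" by (intro ker) simp_all
    hence "(unit_vec m i - unit_vec m j :: 'a vec) $ i = 0\<^sub>v m $ i" by (rule arg_cong)
    thus False using ij by simp
  qed
  show "lin_indpt (set (cols A))"
  proof
    assume "lin_dep (set (cols A))"
    then obtain v where "v \<in> carrier_vec m" "v \<noteq> 0\<^sub>v m" "A *\<^sub>v v = 0\<^sub>v n"
      using lin_depE[OF A _ dist] by blast
    thus False using ker by blast
  qed
qed

definition select_cols :: "nat \<Rightarrow> nat list \<Rightarrow> 'a::zero_neq_one mat" where
  "select_cols m js = mat m (length js) (\<lambda>(j,k). if j = js ! k then 1 else 0)"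

lemma cols_mult_select_cols:
  fixes X :: "'a::semiring_1 mat"
  assumes X: "X \<in> carrier_mat nr m" and js: "set js \<subseteq> {..<m}"
  shows "cols (X * select_cols m js) = map (col X) js"
proof (rule nth_equalityI)
  have P: "select_cols m js \<in> carrier_mat m (length js)" by (simp add: select_cols_def)
  show "length (cols (X * select_cols m js)) = length (map (col X) js)" by (simp add: select_cols_def)
  fix k assume "k < length (cols (X * select_cols m js))"
  hence k: "k < length js" by (simp add: select_cols_def)
  have jk: "js ! k < m" using js k nth_mem by blast
  have "cols (X * select_cols m js) ! k = col (X * select_cols m js) k"
    using k by (intro cols_nth) (simp add: select_cols_def)
  also have "\<dots> = X *\<^sub>v col (select_cols m js) k" by (rule col_mult2[OF X P k])
  also have "col (select_cols m js) k = unit_vec m (js ! k)"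
    using k jk by (intro eq_vecI) (auto simp: select_cols_def)
  finally show "cols (X * select_cols m js) ! k = map (col X) js ! k"
    using k by (simp add: mult_unit_vec_eq_col[OF X jk])
qed

lemma (in vec_space) rank_eq_length_of_maximal_indpt_cols:
  assumes A: "A \<in> carrier_mat n m"
  obtains js where "set js \<subseteq> {..<m}" "distinct (map (col A) js)"
    "lin_indpt (set (map (col A) js))" "rank A = length js"
proof -
  obtain S where S: "maximal S (\<lambda>T. T \<subseteq> set (cols A) \<and> lin_indpt T)"
    by (rule maximal_indpt_subset_of_cols_exists)
  hence rank: "rank A = card S" using rank_card_indpt A by blast
  have S_cols: "S \<subseteq> set (cols A)" and S_indpt: "lin_indpt S" using S unfolding maximal_def by auto
  obtain ss where ss: "set ss = S" "distinct ss"
    using finite_distinct_list finite_subset[OF S_cols] by blast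
  have "\<forall>s\<in>set ss. \<exists>j. j < m \<and> col A j = s"
  proof
    fix s assume "s \<in> set ss"
    hence "s \<in> set (cols A)" using ss S_cols by blast
    then obtain j where "j < length (cols A)" "cols A ! j = s" by (auto simp: in_set_conv_nth)
    thus "\<exists>j. j < m \<and> col A j = s" using A by auto
  qed
  from bchoice[OF this] obtain f where f: "\<forall>s\<in>set ss. f s < m \<and> col A (f s) = s" by blast
  have cols: "map (col A) (map f ss) = ss" using f by (induction ss) auto
  show thesis
  proof (rule that[of "map f ss"])
    show "set (map f ss) \<subseteq> {..<m}" using f by auto
    show "distinct (map (col A) (map f ss))" unfolding cols by (rule ss(2))
    show "lin_indpt (set (map (col A) (map f ss)))" unfolding cols ss(1) by (rule S_indpt)
    show "rank A = length (map f ss)" using rank ss distinct_card by fastforce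
  qed
qed

lemma rank_le_of_kernel_subset:
  fixes A B :: "'a::field mat"
  assumes A: "A \<in> carrier_mat n m" and B: "B \<in> carrier_mat n' m"
    and ker: "\<And>v. v \<in> carrier_vec m \<Longrightarrow> B *\<^sub>v v = 0\<^sub>v n' \<Longrightarrow> A *\<^sub>v v = 0\<^sub>v n"
  shows "vec_space.rank n A \<le> vec_space.rank n' B"
proof -
  interpret VA: vec_space "TYPE('a)" n .
  interpret VB: vec_space "TYPE('a)" n' .
  \<comment> \<open>the columns of B at the positions of a maximal independent set of columns of A stay independent\<close>
  obtain js where js: "set js \<subseteq> {..<m}" "distinct (map (col A) js)"
    "VA.lin_indpt (set (map (col A) js))" "VA.rank A = length js"
    using VA.rank_eq_length_of_maximal_indpt_cols[OF A] by blast
  define P :: "'a mat" where "P = select_cols m js"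
  have P: "P \<in> carrier_mat m (length js)" by (simp add: P_def select_cols_def)
  have AP: "A * P \<in> carrier_mat n (length js)" and BP: "B * P \<in> carrier_mat n' (length js)"
    using A B P by auto
  have indpt: "distinct (cols (B * P)) \<and> VB.lin_indpt (set (cols (B * P)))"
  proof (rule VB.lin_indpt_cols_of_kernel_trivial[OF BP])
    fix v assume v: "v \<in> carrier_vec (length js)" "B * P *\<^sub>v v = 0\<^sub>v n'"
    hence "A * P *\<^sub>v v = 0\<^sub>v n" using A B P ker[of "P *\<^sub>v v"] by simp
    thus "v = 0\<^sub>v (length js)"
      using VA.kernel_trivial_of_lin_indpt_cols[OF AP] cols_mult_select_cols[OF A js(1)] js v(1)
      unfolding P_def by simp
  qed
  have "set (cols (B * P)) \<subseteq> set (cols B)"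
  proof
    fix c assume "c \<in> set (cols (B * P))"
    then obtain j where "j \<in> set js" "c = col B j"
      using cols_mult_select_cols[OF B js(1)] unfolding P_def by auto
    moreover have "j < length (cols B)" using \<open>j \<in> set js\<close> js(1) B by auto
    ultimately show "c \<in> set (cols B)" by (metis cols_nth cols_length nth_mem)
  qed
  hence "card (set (cols (B * P))) \<le> VB.rank B" using indpt VB.rank_ge_card_indpt[OF B] by blast
  moreover have "card (set (cols (B * P))) = length js"
    using indpt carrier_matD[OF P] by (simp add: distinct_card)
  ultimately show ?thesis using js(4) by simp
qed

lemma rank_mat_sum_le:
  fixes f :: "nat \<Rightarrow> nat \<Rightarrow> nat \<Rightarrow> 'a::field"
  shows "vec_space.rank n (mat n m (\<lambda>(x,y). \<Sum>i<k. f i x y))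
    \<le> (\<Sum>i<k. vec_space.rank n (mat n m (\<lambda>(x,y). f i x y)))"
proof (induction k)
  case 0
  have "mat n m (\<lambda>(x,y). \<Sum>i<0. f i x y) = 0\<^sub>m n m" by (rule eq_matI) auto
  thus ?case by (simp only: vec_space.rank_0I)
next
  case (Suc k)
  have "mat n m (\<lambda>(x,y). \<Sum>i<Suc k. f i x y)
     = mat n m (\<lambda>(x,y). \<Sum>i<k. f i x y) + mat n m (\<lambda>(x,y). f k x y)"
    by (rule eq_matI) auto
  moreover have "vec_space.rank n (mat n m (\<lambda>(x,y). \<Sum>i<k. f i x y) + mat n m (\<lambda>(x,y). f k x y))
    \<le> vec_space.rank n (mat n m (\<lambda>(x,y). \<Sum>i<k. f i x y)) + vec_space.rank n (mat n m (\<lambda>(x,y). f k x y))"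
    by (rule vec_space.rank_subadditive) auto
  ultimately show ?case using Suc.IH by simp
qed

lemma rank_sum_of_products_le:
  fixes F G :: "nat \<Rightarrow> nat \<Rightarrow> 'a::field"
  shows "vec_space.rank n (mat n m (\<lambda>(x,y). \<Sum>t<k. F t x * G t y)) \<le> k"
proof -
  have "vec_space.rank n (mat n m (\<lambda>(x,y). \<Sum>t<k. F t x * G t y))
     \<le> (\<Sum>t<k. vec_space.rank n (mat n m (\<lambda>(x,y). F t x * G t y)))"
    by (rule rank_mat_sum_le)
  also have "\<dots> \<le> (\<Sum>t<k. 1)"
    by (intro sum_mono vec_space.rank_le_1_product_entries[where f = "F _" and g = "G _"]) auto
  finally show ?thesis by simp
qed

lemma rank_smult_one_mat:
  fixes c :: "'a::field"
  assumes "c \<noteq> 0"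
  shows "vec_space.rank n (c \<cdot>\<^sub>m 1\<^sub>m n) = n"
  using assms vec_space.det_rank_iff[of "c \<cdot>\<^sub>m 1\<^sub>m n" n] by simp

lemma sum_list_concat_map: "sum_list (concat (map f xs)) = (\<Sum>x\<leftarrow>xs. sum_list (f x))"
  by (induction xs) auto

lemma sum_list_map_eq_0: "(\<And>x. x \<in> set xs \<Longrightarrow> f x = 0) \<Longrightarrow> sum_list (map f xs) = 0"
  by (induction xs) auto

lemma sum_indicator_mult:
  fixes f :: "nat \<Rightarrow> 'a::semiring_1"
  assumes "x < n"
  shows "(\<Sum>z<n. (if x = z then 1 else 0) * f z) = f x"
  using assms by (simp add: if_distrib[of "\<lambda>t. t * _"] cong: if_cong)

lemma sum_mult_indicator:
  "(y0::nat) < n \<Longrightarrow> (\<Sum>y<n. C y * (if y = y0 then 1 else 0)) = (C y0 :: 'a::semiring_1)"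
  by (simp add: if_distrib[of "\<lambda>t. _ * t"] cong: if_cong)

lemma pair_index_less:
  fixes a b c d :: nat
  assumes "a < c" "b < d"
  shows "a * d + b < c * d"
proof -
  have "a * d + b < (a + 1) * d" using assms by simp
  also have "\<dots> \<le> c * d" using assms by (intro mult_le_mono1) simp
  finally show ?thesis .
qed

lemma pair_index_div_mod:
  fixes a b d :: nat
  assumes "b < d"
  shows "(a * d + b) div d = a" "(a * d + b) mod d = b"
  using assms by auto

lemma pair_index_div_mod_less:
  fixes x c d :: nat
  assumes "x < c * d"
  shows "x div d < c" "x mod d < d"
proof -
  show "x div d < c" using assms by (simp add: less_mult_imp_div_less)
  have "d > 0" using assms by (cases d) auto
  thus "x mod d < d" by simp
qed

lemma pair_index_eq_iff:
  fixes a a' b b' d :: nat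
  assumes "b < d" "b' < d"
  shows "a * d + b = a' * d + b' \<longleftrightarrow> a = a' \<and> b = b'"
proof
  assume eq: "a * d + b = a' * d + b'"
  show "a = a' \<and> b = b'"
    using arg_cong[OF eq, of "\<lambda>t. t div d"] arg_cong[OF eq, of "\<lambda>t. t mod d"] assms
    by (simp add: pair_index_div_mod)
qed simp

lemma sum_pair_index:
  fixes h :: "nat \<Rightarrow> 'a::comm_monoid_add"
  shows "(\<Sum>z<m * k. h z) = (\<Sum>a<m. \<Sum>b<k. h (a * k + b))"
proof -
  have "bij_betw (\<lambda>(a,b). a * k + b) ({..<m} \<times> {..<k}) {..<m * k}"
    by (rule bij_betw_byWitness[where f' = "\<lambda>x. (x div k, x mod k)"])
       (auto simp: pair_index_less pair_index_div_mod_less)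
  hence "(\<Sum>z<m * k. h z) = (\<Sum>(a,b)\<in>{..<m} \<times> {..<k}. h (a * k + b))"
    by (simp add: sum.reindex_bij_betw[symmetric] case_prod_unfold)
  also have "\<dots> = (\<Sum>a<m. \<Sum>b<k. h (a * k + b))" by (rule sum.cartesian_product[symmetric])
  finally show ?thesis .
qed

definition on_diagonal :: "nat \<Rightarrow> nat \<Rightarrow> bool" where
  "on_diagonal d x \<longleftrightarrow> x div d = x mod d"

lemma on_diagonal_pair_index: "b < d \<Longrightarrow> on_diagonal d (a * d + b) \<longleftrightarrow> a = b"
  by (simp add: on_diagonal_def pair_index_div_mod)

lemma sum_on_diagonal:
  fixes c :: "'a::semiring_1"
  shows "(\<Sum>x<d * d. if on_diagonal d x then c else 0) = of_nat d * c"
proof -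
  have "(\<Sum>x<d * d. if on_diagonal d x then c else 0) = (\<Sum>a<d. \<Sum>b<d. if on_diagonal d (a * d + b) then c else 0)"
    by (rule sum_pair_index)
  also have "\<dots> = (\<Sum>a<d. \<Sum>b<d. if a = b then c else 0)"
    by (intro sum.cong refl) (simp add: on_diagonal_pair_index)
  also have "\<dots> = of_nat d * c" by simp
  finally show ?thesis .
qed

definition swap_index :: "nat \<Rightarrow> nat \<Rightarrow> nat" where
  "swap_index d x = (x mod d) * d + x div d"

lemma swap_index_less: "x < d * d \<Longrightarrow> swap_index d x < d * d"
  unfolding swap_index_def using pair_index_less pair_index_div_mod_less by blast

lemma swap_index_swap_index:
  assumes "x < d * d"
  shows "swap_index d (swap_index d x) = x"
proof -
  have "x div d < d" "x mod d < d" using pair_index_div_mod_less assms by auto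
  thus ?thesis unfolding swap_index_def by (simp add: pair_index_div_mod)
qed

lemma swap_index_inj_iff:
  assumes "x < d * d" "y < d * d"
  shows "swap_index d x = swap_index d y \<longleftrightarrow> x = y"
proof
  assume "swap_index d x = swap_index d y"
  hence "swap_index d (swap_index d x) = swap_index d (swap_index d y)" by simp
  thus "x = y" using assms by (simp add: swap_index_swap_index)
qed simp

lemma swap_index_eq_iff:
  assumes "x < d * d" "z < d * d"
  shows "x = swap_index d z \<longleftrightarrow> swap_index d x = z"
  using assms swap_index_inj_iff[of x d "swap_index d z"] by (simp add: swap_index_less swap_index_swap_index)

definition tensor_index :: "nat \<Rightarrow> nat \<Rightarrow> nat \<Rightarrow> nat \<Rightarrow> nat" where
  "tensor_index d1 d2 x y = ((x div d1) * d2 + y div d2) * (d1 * d2) + (x mod d1) * d2 + y mod d2"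

lemma idx_tensor_index:
  assumes x: "x < d1 * d1" and y: "y < d2 * d2"
  shows "idx1 d1 d2 (tensor_index d1 d2 x y) = x" "idx2 d1 d2 (tensor_index d1 d2 x y) = y"
    "tensor_index d1 d2 x y < (d1 * d2) * (d1 * d2)"
proof -
  have x12: "x div d1 < d1" "x mod d1 < d1" and y12: "y div d2 < d2" "y mod d2 < d2"
    using pair_index_div_mod_less x y by auto
  have A: "(x div d1) * d2 + y div d2 < d1 * d2" and B: "(x mod d1) * d2 + y mod d2 < d1 * d2"
    using pair_index_less x12 y12 by auto
  have e: "tensor_index d1 d2 x y = ((x div d1) * d2 + y div d2) * (d1 * d2) + ((x mod d1) * d2 + y mod d2)"
    unfolding tensor_index_def by simp
  show "idx1 d1 d2 (tensor_index d1 d2 x y) = x" "idx2 d1 d2 (tensor_index d1 d2 x y) = y"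
    unfolding idx1_def idx2_def e pair_index_div_mod[OF B] pair_index_div_mod[OF y12(1)]
      pair_index_div_mod[OF y12(2)] by simp_all
  show "tensor_index d1 d2 x y < (d1 * d2) * (d1 * d2)" unfolding e using pair_index_less[OF A B] .
qed

lemma tensor_index_idx:
  assumes g: "g < (d1 * d2) * (d1 * d2)"
  shows "tensor_index d1 d2 (idx1 d1 d2 g) (idx2 d1 d2 g) = g"
    "idx1 d1 d2 g < d1 * d1" "idx2 d1 d2 g < d2 * d2"
proof -
  define D where "D = d1 * d2"
  have q: "g div D < D" "g mod D < D" using pair_index_div_mod_less g unfolding D_def by auto
  have a: "g div D div d2 < d1" "g div D mod d2 < d2" "g mod D div d2 < d1" "g mod D mod d2 < d2"
    using pair_index_div_mod_less q unfolding D_def by auto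
  show "idx1 d1 d2 g < d1 * d1" "idx2 d1 d2 g < d2 * d2"
    unfolding idx1_def idx2_def D_def[symmetric] using pair_index_less a by auto
  have "tensor_index d1 d2 (idx1 d1 d2 g) (idx2 d1 d2 g)
     = (g div D div d2 * d2 + g div D mod d2) * D + (g mod D div d2 * d2 + g mod D mod d2)"
    unfolding tensor_index_def idx1_def idx2_def D_def[symmetric] using a
    by (simp add: D_def algebra_simps)
  also have "\<dots> = g" by simp
  finally show "tensor_index d1 d2 (idx1 d1 d2 g) (idx2 d1 d2 g) = g" .
qed

lemma sum_tensor_index:
  fixes h :: "nat \<Rightarrow> 'a::comm_monoid_add"
  shows "(\<Sum>g<(d1 * d2) * (d1 * d2). h g) = (\<Sum>x<d1 * d1. \<Sum>y<d2 * d2. h (tensor_index d1 d2 x y))"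
proof -
  have "bij_betw (\<lambda>(x,y). tensor_index d1 d2 x y) ({..<d1 * d1} \<times> {..<d2 * d2}) {..<(d1 * d2) * (d1 * d2)}"
    by (rule bij_betw_byWitness[where f' = "\<lambda>g. (idx1 d1 d2 g, idx2 d1 d2 g)"])
       (auto simp: idx_tensor_index tensor_index_idx)
  hence "(\<Sum>g<(d1 * d2) * (d1 * d2). h g) = (\<Sum>(x,y)\<in>{..<d1 * d1} \<times> {..<d2 * d2}. h (tensor_index d1 d2 x y))"
    by (simp add: sum.reindex_bij_betw[symmetric] case_prod_unfold)
  also have "\<dots> = (\<Sum>x<d1 * d1. \<Sum>y<d2 * d2. h (tensor_index d1 d2 x y))"
    by (rule sum.cartesian_product[symmetric])
  finally show ?thesis .
qed

lemma tensor_index_diagonal: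
  assumes "i < d1" "a < d2" "b < d2"
  shows "tensor_index d1 d2 (i * d1 + i) (a * d2 + b) = (i * d2 + a) * (d1 * d2) + (i * d2 + b)"
  using assms by (simp add: tensor_index_def pair_index_div_mod)

section \<open>Mixtures of pure states\<close>

lemma cnj_mult_self: "cnj z * z = complex_of_real ((cmod z)\<^sup>2)"
  by (simp add: complex_mult_cnj cmod_power2 mult.commute)

lemma cscalar_prod_eq_sum:
  fixes u w :: "complex vec"
  assumes "u \<in> carrier_vec n" "w \<in> carrier_vec n"
  shows "conjugate u \<bullet> w = (\<Sum>j<n. cnj (u $ j) * w $ j)"
  using assms by (simp add: scalar_prod_def atLeast0LessThan)

lemma quadratic_form_eq_sum:
  fixes A :: "complex mat"
  assumes "A \<in> carrier_mat n n" "w \<in> carrier_vec n"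
  shows "conjugate w \<bullet> (A *\<^sub>v w) = (\<Sum>i<n. \<Sum>j<n. cnj (w $ i) * A $$ (i,j) * w $ j)"
  using assms by (simp add: scalar_prod_def atLeast0LessThan sum_distrib_left mult.assoc)

lemma index_ketbra:
  "i < dim_vec v \<Longrightarrow> j < dim_vec w \<Longrightarrow> ketbra v w $$ (i,j) = v $ i * cnj (w $ j)"
  by (simp add: ketbra_def)

lemma mixture_Cons: "mixture n ((p,\<psi>) # ps) = complex_of_real p \<cdot>\<^sub>m ketbra \<psi> \<psi> + mixture n ps"
  by (simp add: mixture_def)

lemma mixture_carrier: "mixture n ps \<in> carrier_mat n n"
  by (induction ps) (auto simp: mixture_def)

lemma index_mixture:
  assumes "snd ` set ps \<subseteq> carrier_vec n" "i < n" "j < n"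
  shows "mixture n ps $$ (i,j) = (\<Sum>(p,\<psi>)\<leftarrow>ps. complex_of_real p * \<psi> $ i * cnj (\<psi> $ j))"
  using assms(1)
proof (induction ps)
  case Nil thus ?case using assms by (simp add: mixture_def)
next
  case (Cons x ps)
  obtain p \<psi> where x: "x = (p,\<psi>)" by (cases x)
  have "\<psi> \<in> carrier_vec n" using Cons.prems x by auto
  thus ?case using Cons mixture_carrier[of n ps] assms(2,3) unfolding x mixture_Cons
    by (simp add: ketbra_def)
qed

lemma index_mixture_upt:
  assumes "\<And>z. z < K \<Longrightarrow> V z \<in> carrier_vec n" "i < n" "j < n"
  shows "mixture n (map (\<lambda>z. (P z, V z)) [0..<K]) $$ (i,j)
    = (\<Sum>z<K. complex_of_real (P z) * V z $ i * cnj (V z $ j))"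
  using assms by (subst index_mixture)
    (auto simp: interv_sum_list_conv_sum_set_nat atLeast0LessThan comp_def)

lemma mixture_eqI:
  assumes "M \<in> carrier_mat n n" "snd ` set ps \<subseteq> carrier_vec n"
    and "\<And>i j. i < n \<Longrightarrow> j < n \<Longrightarrow>
      M $$ (i,j) = (\<Sum>(p,\<psi>)\<leftarrow>ps. complex_of_real p * \<psi> $ i * cnj (\<psi> $ j))"
  shows "M = mixture n ps"
  using assms mixture_carrier[of n ps] by (intro eq_matI) (auto simp: index_mixture)

lemma mixture_append:
  assumes "snd ` set ps \<subseteq> carrier_vec n" "snd ` set qs \<subseteq> carrier_vec n"
  shows "mixture n (ps @ qs) = mixture n ps + mixture n qs"
  using assms mixture_carrier[of n ps] mixture_carrier[of n qs]
  by (intro mixture_eqI[symmetric]) (auto simp: index_mixture)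

lemma mixture_single:
  assumes "\<psi> \<in> carrier_vec n"
  shows "mixture n [(1,\<psi>)] = ketbra \<psi> \<psi>"
  using assms by (intro eq_matI) (auto simp: mixture_def ketbra_def)

definition scale_ensemble :: "real \<Rightarrow> (real \<times> complex vec) list \<Rightarrow> (real \<times> complex vec) list" where
  "scale_ensemble c ps = map (\<lambda>(p,\<psi>). (c * p, \<psi>)) ps"

lemma set_scale_ensemble: "snd ` set (scale_ensemble c ps) = snd ` set ps"
  by (force simp: scale_ensemble_def)

lemma set_scale_ensemble_weights:
  "(p,\<psi>) \<in> set (scale_ensemble c ps) \<longleftrightarrow> (\<exists>q. p = c * q \<and> (q,\<psi>) \<in> set ps)"
  by (force simp: scale_ensemble_def)

lemma mixture_scale_ensemble:
  assumes "snd ` set ps \<subseteq> carrier_vec n"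
  shows "mixture n (scale_ensemble c ps) = complex_of_real c \<cdot>\<^sub>m mixture n ps"
proof (rule sym, rule mixture_eqI)
  fix i j assume ij: "i < n" "j < n"
  show "(complex_of_real c \<cdot>\<^sub>m mixture n ps) $$ (i,j)
    = (\<Sum>(p,\<psi>)\<leftarrow>scale_ensemble c ps. complex_of_real p * \<psi> $ i * cnj (\<psi> $ j))"
    using ij mixture_carrier[of n ps] assms
    by (simp add: index_mixture scale_ensemble_def sum_list_const_mult case_prod_unfold
        comp_def mult.assoc)
qed (use assms mixture_carrier[of n ps] in \<open>auto simp: set_scale_ensemble\<close>)

lemma quadratic_form_ketbra:
  assumes "\<psi> \<in> carrier_vec n" "w \<in> carrier_vec n"
  shows "conjugate w \<bullet> (ketbra \<psi> \<psi> *\<^sub>v w) = complex_of_real ((cmod (conjugate \<psi> \<bullet> w))\<^sup>2)"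
proof -
  have "conjugate w \<bullet> (ketbra \<psi> \<psi> *\<^sub>v w) = (\<Sum>i<n. \<Sum>j<n. (cnj (w $ i) * \<psi> $ i) * (cnj (\<psi> $ j) * w $ j))"
    using assms by (subst quadratic_form_eq_sum[of _ n]) (auto simp: ketbra_def mult_ac)
  also have "\<dots> = cnj (conjugate \<psi> \<bullet> w) * (conjugate \<psi> \<bullet> w)"
    using assms by (simp add: cscalar_prod_eq_sum sum_product mult.commute)
  finally show ?thesis by (simp only: cnj_mult_self)
qed

lemma quadratic_form_mixture:
  assumes "snd ` set ps \<subseteq> carrier_vec n" "w \<in> carrier_vec n"
  shows "conjugate w \<bullet> (mixture n ps *\<^sub>v w)
     = complex_of_real (\<Sum>(p,\<psi>)\<leftarrow>ps. p * (cmod (conjugate \<psi> \<bullet> w))\<^sup>2)"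
  using assms(1)
proof (induction ps)
  case Nil thus ?case using assms(2) by (simp add: mixture_def quadratic_form_eq_sum[of _ n])
next
  case (Cons x ps)
  obtain p \<psi> where x: "x = (p,\<psi>)" by (cases x)
  have \<psi>: "\<psi> \<in> carrier_vec n" using Cons.prems x by auto
  let ?K = "ketbra \<psi> \<psi>" and ?M = "mixture n ps"
  have K: "?K \<in> carrier_mat n n" using \<psi> by (simp add: ketbra_def)
  have "conjugate w \<bullet> ((complex_of_real p \<cdot>\<^sub>m ?K + ?M) *\<^sub>v w)
      = complex_of_real p * (conjugate w \<bullet> (?K *\<^sub>v w)) + conjugate w \<bullet> (?M *\<^sub>v w)"
    using K mixture_carrier[of n ps] assms(2)
    by (simp add: quadratic_form_eq_sum[of _ n] algebra_simps sum.distrib sum_distrib_left)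
  thus ?case using Cons \<psi> assms(2) unfolding x mixture_Cons by (simp add: quadratic_form_ketbra)
qed

definition ensemble :: "nat \<Rightarrow> (real \<times> complex vec) list \<Rightarrow> bool" where
  "ensemble n ps \<longleftrightarrow> (\<forall>(p,\<psi>)\<in>set ps. p > 0 \<and> \<psi> \<in> carrier_vec n)"

lemma psd_mixture:
  assumes "\<forall>(p,\<psi>)\<in>set ps. p \<ge> 0 \<and> \<psi> \<in> carrier_vec n"
  shows "psd n (mixture n ps)"
  unfolding psd_def
proof (rule conjI[OF mixture_carrier], rule ballI)
  fix v :: "complex vec" assume v: "v \<in> carrier_vec n"
  have "(\<Sum>(p,\<psi>)\<leftarrow>ps. p * (cmod (conjugate \<psi> \<bullet> v))\<^sup>2) \<ge> 0"
    using assms by (intro sum_list_nonneg) auto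
  moreover have "snd ` set ps \<subseteq> carrier_vec n" using assms by auto
  ultimately show "Im (conjugate v \<bullet> (mixture n ps *\<^sub>v v)) = 0
      \<and> Re (conjugate v \<bullet> (mixture n ps *\<^sub>v v)) \<ge> 0"
    using v by (simp add: quadratic_form_mixture)
qed

lemma mixture_filter_pos:
  assumes "\<forall>(p,\<psi>)\<in>set ps. p \<ge> 0 \<and> \<psi> \<in> carrier_vec n"
  shows "mixture n (filter (\<lambda>x. fst x > 0) ps) = mixture n ps"
proof (rule mixture_eqI)
  show "snd ` set ps \<subseteq> carrier_vec n" using assms by auto
  fix i j assume "i < n" "j < n"
  moreover have "snd ` set (filter (\<lambda>x. fst x > 0) ps) \<subseteq> carrier_vec n" using assms by auto
  ultimately show "mixture n (filter (\<lambda>x. fst x > 0) ps) $$ (i,j)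
      = (\<Sum>(p,\<psi>)\<leftarrow>ps. complex_of_real p * \<psi> $ i * cnj (\<psi> $ j))"
    using assms by (auto simp: index_mixture intro!: sum_list_map_filter)
qed (rule mixture_carrier)

lemma ensemble_filter_pos:
  assumes "\<forall>(p,\<psi>)\<in>set ps. p \<ge> 0 \<and> \<psi> \<in> carrier_vec n"
  shows "ensemble n (filter (\<lambda>x. fst x > 0) ps)"
  using assms by (auto simp: ensemble_def)

definition orth_ensemble :: "nat \<Rightarrow> complex vec \<Rightarrow> (real \<times> complex vec) list" where
  "orth_ensemble n u = map (\<lambda>z. (1, unit_vec n z - cnj (u $ z) \<cdot>\<^sub>v u)) [0..<n]"

lemma orth_ensemble_carrier: "u \<in> carrier_vec n \<Longrightarrow> snd ` set (orth_ensemble n u) \<subseteq> carrier_vec n"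
  by (auto simp: orth_ensemble_def)

lemma mixture_orth_ensemble:
  assumes u: "u \<in> carrier_vec n" and norm: "conjugate u \<bullet> u = 1"
  shows "mixture n (orth_ensemble n u) = 1\<^sub>m n - ketbra u u"
proof (rule eq_matI)
  have sq: "(\<Sum>z<n. cnj (u $ z) * u $ z) = 1" using norm u by (simp add: cscalar_prod_eq_sum)
  fix x y assume "x < dim_row (1\<^sub>m n - ketbra u u)" "y < dim_col (1\<^sub>m n - ketbra u u)"
  hence xy: "x < n" "y < n" using u by (auto simp: ketbra_def)
  have "mixture n (orth_ensemble n u) $$ (x,y)
    = (\<Sum>z<n. ((if x = z then 1 else 0) - cnj (u $ z) * u $ x) * ((if y = z then 1 else 0) - u $ z * cnj (u $ y)))"
    unfolding orth_ensemble_def using u xy by (subst index_mixture_upt) (auto simp: if_distrib[of cnj] cong: if_cong)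
  also have "\<dots> = (\<Sum>z<n. (if x = z then 1 else 0) * (if y = z then 1 else 0))
      - (\<Sum>z<n. (if x = z then 1 else 0) * (u $ z * cnj (u $ y)))
      - (\<Sum>z<n. (if y = z then 1 else 0) * (cnj (u $ z) * u $ x))
      + u $ x * cnj (u $ y) * (\<Sum>z<n. cnj (u $ z) * u $ z)"
    by (simp add: sum_subtractf sum.distrib sum_distrib_left algebra_simps)
  also have "\<dots> = (if x = y then 1 else 0) - u $ x * cnj (u $ y)"
    using xy sq by (simp add: sum_indicator_mult)
  finally show "mixture n (orth_ensemble n u) $$ (x,y) = (1\<^sub>m n - ketbra u u) $$ (x,y)"
    using u xy sq by (simp add: ketbra_def)
qed (use u mixture_carrier in \<open>auto simp: ketbra_def\<close>)

lemma orth_ensemble_orthogonal: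
  assumes u: "u \<in> carrier_vec n" and norm: "conjugate u \<bullet> u = 1" and \<nu>: "\<nu> \<in> snd ` set (orth_ensemble n u)"
  shows "conjugate \<nu> \<bullet> u = 0"
proof -
  obtain z where z: "z < n" "\<nu> = unit_vec n z - cnj (u $ z) \<cdot>\<^sub>v u"
    using \<nu> by (auto simp: orth_ensemble_def)
  have "conjugate \<nu> \<bullet> u = (\<Sum>j<n. u $ j * (if j = z then 1 else 0)) - u $ z * (\<Sum>j<n. cnj (u $ j) * u $ j)"
    using u z by (simp add: cscalar_prod_eq_sum[of _ n] algebra_simps sum_subtractf sum_distrib_left
        if_distrib[of cnj] cong: if_cong)
  also have "\<dots> = 0" using norm u z
    by (simp add: cscalar_prod_eq_sum if_distrib[of "\<lambda>t. _ * t"] cong: if_cong)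
  finally show ?thesis .
qed

section \<open>Schmidt rank and Schmidt number\<close>

lemma schmidt_rank_le_dim: "schmidt_rank dA dB \<psi> \<le> dB"
  unfolding schmidt_rank_def by (rule vec_space.rank_le_nc) (simp add: ptrace_A_def)

lemma schmidt_rank_le_of_decomposition:
  assumes \<psi>: "\<psi> \<in> carrier_vec (dA * dB)"
    and dec: "\<And>a b. a < dA \<Longrightarrow> b < dB \<Longrightarrow> \<psi> $ (a * dB + b) = (\<Sum>t<k. F t a * G t b)"
  shows "schmidt_rank dA dB \<psi> \<le> k"
proof -
  define H where "H t b' = (\<Sum>a<dA. F t a * cnj (\<psi> $ (a * dB + b')))" for t b'
  have "ptrace_A dA dB (ketbra \<psi> \<psi>) = mat dB dB (\<lambda>(b,b'). \<Sum>t<k. G t b * H t b')"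
  proof (rule eq_matI)
    fix b b' assume "b < dim_row (mat dB dB (\<lambda>(b,b'). \<Sum>t<k. G t b * H t b'))"
      "b' < dim_col (mat dB dB (\<lambda>(b,b'). \<Sum>t<k. G t b * H t b'))"
    hence bb: "b < dB" "b' < dB" by auto
    have "ptrace_A dA dB (ketbra \<psi> \<psi>) $$ (b,b') = (\<Sum>a<dA. \<psi> $ (a * dB + b) * cnj (\<psi> $ (a * dB + b')))"
      using bb \<psi> pair_index_less by (simp add: ptrace_A_def index_ketbra)
    also have "\<dots> = (\<Sum>a<dA. \<Sum>t<k. G t b * (F t a * cnj (\<psi> $ (a * dB + b'))))"
      using bb by (intro sum.cong refl) (simp add: dec sum_distrib_right mult_ac)
    also have "\<dots> = (\<Sum>t<k. G t b * H t b')"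
      unfolding H_def by (subst sum.swap) (simp add: sum_distrib_left)
    finally show "ptrace_A dA dB (ketbra \<psi> \<psi>) $$ (b,b') = mat dB dB (\<lambda>(b,b'). \<Sum>t<k. G t b * H t b') $$ (b,b')"
      using bb by simp
  qed (auto simp: ptrace_A_def)
  thus ?thesis unfolding schmidt_rank_def by (simp add: rank_sum_of_products_le)
qed

lemma quadratic_form_ptrace_A:
  assumes \<psi>: "\<psi> \<in> carrier_vec (dA * dB)" and v: "v \<in> carrier_vec dB"
  shows "conjugate v \<bullet> (ptrace_A dA dB (ketbra \<psi> \<psi>) *\<^sub>v v)
     = complex_of_real (\<Sum>a<dA. (cmod (\<Sum>b<dB. cnj (\<psi> $ (a * dB + b)) * v $ b))\<^sup>2)"
proof -
  define W where "W a = (\<Sum>b<dB. cnj (\<psi> $ (a * dB + b)) * v $ b)" for a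
  have "conjugate v \<bullet> (ptrace_A dA dB (ketbra \<psi> \<psi>) *\<^sub>v v)
      = (\<Sum>b<dB. \<Sum>b'<dB. \<Sum>a<dA. (cnj (v $ b) * \<psi> $ (a * dB + b)) * (cnj (\<psi> $ (a * dB + b')) * v $ b'))"
    using \<psi> v pair_index_less
    by (subst quadratic_form_eq_sum[of _ dB])
       (auto simp: ptrace_A_def index_ketbra sum_distrib_left sum_distrib_right mult_ac intro!: sum.cong)
  also have "\<dots> = (\<Sum>a<dA. (\<Sum>b<dB. cnj (v $ b) * \<psi> $ (a * dB + b)) * (\<Sum>b'<dB. cnj (\<psi> $ (a * dB + b')) * v $ b'))"
    by (simp add: sum_product sum.swap[of _ "{..<dA}"])
  also have "\<dots> = (\<Sum>a<dA. cnj (W a) * W a)" unfolding W_def by (simp add: mult.commute)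
  also have "\<dots> = complex_of_real (\<Sum>a<dA. (cmod (W a))\<^sup>2)"
    by (simp only: cnj_mult_self of_real_sum)
  finally show ?thesis unfolding W_def .
qed

lemma rank_rows_le_schmidt_rank:
  assumes \<psi>: "\<psi> \<in> carrier_vec (dA * dB)" and f: "\<And>k. k < r \<Longrightarrow> f k < dA"
  shows "vec_space.rank r (mat r dB (\<lambda>(k,b). cnj (\<psi> $ (f k * dB + b)))) \<le> schmidt_rank dA dB \<psi>"
  unfolding schmidt_rank_def
proof (rule rank_le_of_kernel_subset)
  show "ptrace_A dA dB (ketbra \<psi> \<psi>) \<in> carrier_mat dB dB" by (simp add: ptrace_A_def)
  fix v assume v: "v \<in> carrier_vec dB" "ptrace_A dA dB (ketbra \<psi> \<psi>) *\<^sub>v v = 0\<^sub>v dB"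
  have "complex_of_real (\<Sum>a<dA. (cmod (\<Sum>b<dB. cnj (\<psi> $ (a * dB + b)) * v $ b))\<^sup>2) = 0"
    unfolding quadratic_form_ptrace_A[OF \<psi> v(1), symmetric] using v by simp
  hence "(\<Sum>a<dA. (cmod (\<Sum>b<dB. cnj (\<psi> $ (a * dB + b)) * v $ b))\<^sup>2) = 0"
    by (simp only: of_real_eq_0_iff)
  hence zero: "(\<Sum>b<dB. cnj (\<psi> $ (a * dB + b)) * v $ b) = 0" if "a < dA" for a
    using that by (subst (asm) sum_nonneg_eq_0_iff) auto
  show "mat r dB (\<lambda>(k,b). cnj (\<psi> $ (f k * dB + b))) *\<^sub>v v = 0\<^sub>v r"
    using v(1) f zero by (intro eq_vecI) (auto simp: scalar_prod_def atLeast0LessThan)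
qed simp

lemma SN_le:
  assumes "\<rho> = mixture (dA * dB) ps" "ensemble (dA * dB) ps"
    and "\<forall>(p,\<psi>)\<in>set ps. schmidt_rank dA dB \<psi> \<le> k"
  shows "SN dA dB \<rho> \<le> k"
  unfolding SN_def using assms by (intro Least_le) (auto simp: ensemble_def)

lemma SN_attained:
  assumes "\<rho> = mixture (dA * dB) ps" "ensemble (dA * dB) ps"
  obtains qs where "\<rho> = mixture (dA * dB) qs" "ensemble (dA * dB) qs"
    "\<forall>(p,\<psi>)\<in>set qs. schmidt_rank dA dB \<psi> \<le> SN dA dB \<rho>"
proof -
  let ?P = "\<lambda>k. \<exists>ps. \<rho> = mixture (dA * dB) ps \<and>
      (\<forall>(p,\<psi>) \<in> set ps. p > 0 \<and> \<psi> \<in> carrier_vec (dA * dB) \<and> schmidt_rank dA dB \<psi> \<le> k)"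
  have "?P dB" using assms schmidt_rank_le_dim by (auto simp: ensemble_def)
  hence "?P (SN dA dB \<rho>)" unfolding SN_def by (rule LeastI)
  thus ?thesis using that by (auto simp: ensemble_def)
qed

lemma Omega_vec_carrier: "Omega_vec d \<in> carrier_vec (d * d)"
  by (simp add: Omega_vec_def)

lemma index_Omega_vec:
  "x < d * d \<Longrightarrow> Omega_vec d $ x = (if on_diagonal d x then complex_of_real (1 / sqrt (real d)) else 0)"
  by (simp add: Omega_vec_def on_diagonal_def)

lemma inverse_sqrt_square:
  "cnj (complex_of_real (1 / sqrt (real d))) * complex_of_real (1 / sqrt (real d)) = 1 / of_nat d"
proof -
  have "(1 / sqrt (real d))\<^sup>2 = 1 / real d" by (simp add: power_one_over)
  hence "1 / sqrt (real d) * (1 / sqrt (real d)) = 1 / real d" by (simp add: power2_eq_square)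
  thus ?thesis by (simp only: complex_cnj_complex_of_real flip: of_real_mult) simp
qed

lemma Omega_vec_square:
  assumes "x < d * d"
  shows "cnj (Omega_vec d $ x) * Omega_vec d $ x = (if on_diagonal d x then 1 / of_nat d else 0)"
  by (cases "on_diagonal d x")
     (simp_all only: index_Omega_vec[OF assms] if_True if_False inverse_sqrt_square complex_cnj_zero
      mult_zero_left)

lemma cscalar_prod_Omega_vec:
  assumes "d > 0"
  shows "conjugate (Omega_vec d) \<bullet> Omega_vec d = 1"
proof -
  have "conjugate (Omega_vec d) \<bullet> Omega_vec d
      = (\<Sum>x<d * d. if on_diagonal d x then 1 / of_nat d else 0)"
    using Omega_vec_carrier[of d] by (simp add: cscalar_prod_eq_sum[of _ "d * d"] Omega_vec_square)
  also have "\<dots> = 1" using assms by (simp add: sum_on_diagonal)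
  finally show ?thesis .
qed

lemma index_omega:
  assumes "x < d * d" "y < d * d"
  shows "omega d $$ (x,y) = (if on_diagonal d x \<and> on_diagonal d y then 1 / of_nat d else 0)"
proof -
  have "omega d $$ (x,y) = Omega_vec d $ x * cnj (Omega_vec d $ y)"
    using assms Omega_vec_carrier[of d] by (simp add: omega_def index_ketbra)
  thus ?thesis using inverse_sqrt_square[of d]
    by (cases "on_diagonal d x"; cases "on_diagonal d y")
       (simp_all only: index_Omega_vec assms if_True if_False complex_cnj_zero mult_zero_left
        mult_zero_right mult.commute simp_thms)
qed

lemma omega_eq_mixture: "omega d = mixture (d * d) [(1, Omega_vec d)]"
  unfolding omega_def by (rule mixture_single[OF Omega_vec_carrier, symmetric])

lemma one_minus_omega_eq_mixture:
  assumes "d > 0"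
  shows "1\<^sub>m (d * d) - omega d = mixture (d * d) (orth_ensemble (d * d) (Omega_vec d))"
  unfolding omega_def
  by (rule mixture_orth_ensemble[OF Omega_vec_carrier cscalar_prod_Omega_vec[OF assms], symmetric])

lemma index_partial_transpose:
  "i < dA * dB \<Longrightarrow> j < dA * dB \<Longrightarrow>
    partial_transpose dA dB M $$ (i,j) = M $$ (i div dB * dB + j mod dB, j div dB * dB + i mod dB)"
  by (simp add: partial_transpose_def)

lemma partial_transpose_index_less:
  fixes i j dA dB :: nat
  assumes "i < dA * dB" "j < dA * dB"
  shows "i div dB * dB + j mod dB < dA * dB"
  using assms pair_index_less pair_index_div_mod_less by meson

lemma partial_transpose_add:
  assumes "A \<in> carrier_mat (dA * dB) (dA * dB)" "B \<in> carrier_mat (dA * dB) (dA * dB)"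
  shows "partial_transpose dA dB (A + B) = partial_transpose dA dB A + partial_transpose dA dB B"
  using assms partial_transpose_index_less by (intro eq_matI) (auto simp: partial_transpose_def)

lemma partial_transpose_smult:
  assumes "A \<in> carrier_mat (dA * dB) (dA * dB)"
  shows "partial_transpose dA dB (c \<cdot>\<^sub>m A) = c \<cdot>\<^sub>m partial_transpose dA dB A"
  using assms partial_transpose_index_less by (intro eq_matI) (auto simp: partial_transpose_def)

lemma partial_transpose_index_eq_iff:
  fixes x y d :: nat
  assumes "x < d * d" "y < d * d"
  shows "x div d * d + y mod d = y div d * d + x mod d \<longleftrightarrow> x = y"
proof
  assume eq: "x div d * d + y mod d = y div d * d + x mod d"
  have "y mod d < d" "x mod d < d"
    using pair_index_div_mod_less[OF assms(1)] pair_index_div_mod_less[OF assms(2)] by auto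
  hence "x div d = y div d" "y mod d = x mod d"
    using pair_index_div_mod[of "y mod d" d "x div d"] pair_index_div_mod[of "x mod d" d "y div d"] eq
    by metis+
  thus "x = y" by (metis div_mult_mod_eq)
qed simp

lemma on_diagonal_partial_transpose_index_iff:
  assumes "x < d * d" "y < d * d"
  shows "on_diagonal d (x div d * d + y mod d) \<and> on_diagonal d (y div d * d + x mod d)
    \<longleftrightarrow> y = swap_index d x"
proof -
  have a: "x div d < d" "x mod d < d" "y div d < d" "y mod d < d"
    using assms pair_index_div_mod_less by auto
  have "y = swap_index d x \<longleftrightarrow> y div d = x mod d \<and> y mod d = x div d"
    unfolding swap_index_def using pair_index_div_mod[OF a(1)] by (metis div_mult_mod_eq)
  thus ?thesis using a by (auto simp: on_diagonal_pair_index)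
qed

lemma index_partial_transpose_omega:
  assumes "x < d * d" "y < d * d"
  shows "partial_transpose d d (omega d) $$ (x,y) = (if y = swap_index d x then 1 / of_nat d else 0)"
  using assms partial_transpose_index_less
  by (simp add: index_partial_transpose index_omega on_diagonal_partial_transpose_index_iff)

lemma index_partial_transpose_one_minus_omega:
  assumes "x < d * d" "y < d * d"
  shows "partial_transpose d d (1\<^sub>m (d * d) - omega d) $$ (x,y)
    = (if x = y then 1 else 0) - (if y = swap_index d x then 1 / of_nat d else 0)"
proof -
  have "x div d * d + y mod d < d * d" "y div d * d + x mod d < d * d"
    using assms partial_transpose_index_less by auto
  moreover have "omega d \<in> carrier_mat (d * d) (d * d)"
    using Omega_vec_carrier[of d] by (simp add: omega_def ketbra_def)
  ultimately show ?thesis using assms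
    by (simp add: index_partial_transpose index_omega partial_transpose_index_eq_iff
        on_diagonal_partial_transpose_index_iff)
qed

lemma tensor12_carrier: "tensor12 d1 d2 X Y \<in> carrier_mat ((d1 * d2) * (d1 * d2)) ((d1 * d2) * (d1 * d2))"
  by (simp add: tensor12_def)

lemma idx_partial_transpose_index:
  assumes g: "g < (d1 * d2) * (d1 * d2)" and g': "g' < (d1 * d2) * (d1 * d2)"
  defines "G \<equiv> g div (d1 * d2) * (d1 * d2) + g' mod (d1 * d2)"
  shows "G < (d1 * d2) * (d1 * d2)"
    "idx1 d1 d2 G = idx1 d1 d2 g div d1 * d1 + idx1 d1 d2 g' mod d1"
    "idx2 d1 d2 G = idx2 d1 d2 g div d2 * d2 + idx2 d1 d2 g' mod d2"
proof -
  define D where "D = d1 * d2"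
  have q: "g div D < D" "g mod D < D" "g' mod D < D" using pair_index_div_mod_less g g' unfolding D_def by auto
  have a: "g mod D div d2 < d1" "g mod D mod d2 < d2" "g' mod D div d2 < d1" "g' mod D mod d2 < d2"
    using pair_index_div_mod_less q unfolding D_def by auto
  have G: "G = g div D * D + g' mod D" unfolding G_def D_def ..
  show "G < (d1 * d2) * (d1 * d2)" unfolding G D_def[symmetric] using pair_index_less q by blast
  show "idx1 d1 d2 G = idx1 d1 d2 g div d1 * d1 + idx1 d1 d2 g' mod d1"
    unfolding idx1_def D_def[symmetric] G pair_index_div_mod[OF q(3)] pair_index_div_mod[OF a(1)]
      pair_index_div_mod[OF a(3)] ..
  show "idx2 d1 d2 G = idx2 d1 d2 g div d2 * d2 + idx2 d1 d2 g' mod d2"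
    unfolding idx2_def D_def[symmetric] G pair_index_div_mod[OF q(3)] pair_index_div_mod[OF a(2)]
      pair_index_div_mod[OF a(4)] ..
qed

lemma partial_transpose_tensor12:
  "partial_transpose (d1 * d2) (d1 * d2) (tensor12 d1 d2 X Y)
    = tensor12 d1 d2 (partial_transpose d1 d1 X) (partial_transpose d2 d2 Y)"
proof (rule eq_matI)
  fix g g' assume "g < dim_row (tensor12 d1 d2 (partial_transpose d1 d1 X) (partial_transpose d2 d2 Y))"
    "g' < dim_col (tensor12 d1 d2 (partial_transpose d1 d1 X) (partial_transpose d2 d2 Y))"
  hence g: "g < (d1 * d2) * (d1 * d2)" "g' < (d1 * d2) * (d1 * d2)" by (auto simp: tensor12_def)
  show "partial_transpose (d1 * d2) (d1 * d2) (tensor12 d1 d2 X Y) $$ (g,g')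
    = tensor12 d1 d2 (partial_transpose d1 d1 X) (partial_transpose d2 d2 Y) $$ (g,g')"
    using g idx_partial_transpose_index[OF g] idx_partial_transpose_index[OF g(2,1)] tensor_index_idx(2,3)[OF g(1)]
      tensor_index_idx(2,3)[OF g(2)] by (simp add: index_partial_transpose tensor12_def)
qed (auto simp: tensor12_def partial_transpose_def)

definition tensor_vec12 :: "nat \<Rightarrow> nat \<Rightarrow> complex vec \<Rightarrow> complex vec \<Rightarrow> complex vec" where
  "tensor_vec12 d1 d2 u v = vec ((d1 * d2) * (d1 * d2)) (\<lambda>g. u $ idx1 d1 d2 g * v $ idx2 d1 d2 g)"

lemma tensor_vec12_carrier: "tensor_vec12 d1 d2 u v \<in> carrier_vec ((d1 * d2) * (d1 * d2))"
  by (simp add: tensor_vec12_def)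

lemma index_tensor_vec12:
  "g < (d1 * d2) * (d1 * d2) \<Longrightarrow> tensor_vec12 d1 d2 u v $ g = u $ idx1 d1 d2 g * v $ idx2 d1 d2 g"
  by (simp add: tensor_vec12_def)

lemma cscalar_prod_tensor_vec12:
  assumes u: "u \<in> carrier_vec (d1 * d1)" "u' \<in> carrier_vec (d1 * d1)"
    and v: "v \<in> carrier_vec (d2 * d2)" "v' \<in> carrier_vec (d2 * d2)"
  shows "conjugate (tensor_vec12 d1 d2 u v) \<bullet> tensor_vec12 d1 d2 u' v' = (conjugate u \<bullet> u') * (conjugate v \<bullet> v')"
proof -
  have "conjugate (tensor_vec12 d1 d2 u v) \<bullet> tensor_vec12 d1 d2 u' v'
     = (\<Sum>g<(d1 * d2) * (d1 * d2). cnj (tensor_vec12 d1 d2 u v $ g) * tensor_vec12 d1 d2 u' v' $ g)"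
    by (rule cscalar_prod_eq_sum) (rule tensor_vec12_carrier)+
  also have "\<dots> = (\<Sum>x<d1 * d1. \<Sum>y<d2 * d2. (cnj (u $ x) * u' $ x) * (cnj (v $ y) * v' $ y))"
    unfolding sum_tensor_index
  proof (intro sum.cong refl)
    fix x y assume "x \<in> {..<d1 * d1}" "y \<in> {..<d2 * d2}"
    hence xy: "x < d1 * d1" "y < d2 * d2" by auto
    show "cnj (tensor_vec12 d1 d2 u v $ tensor_index d1 d2 x y) * tensor_vec12 d1 d2 u' v' $ tensor_index d1 d2 x y
      = cnj (u $ x) * u' $ x * (cnj (v $ y) * v' $ y)"
      by (simp add: index_tensor_vec12[OF idx_tensor_index(3)[OF xy]] idx_tensor_index[OF xy] mult_ac)
  qed
  also have "\<dots> = (conjugate u \<bullet> u') * (conjugate v \<bullet> v')"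
    using u v by (simp add: cscalar_prod_eq_sum sum_product)
  finally show ?thesis .
qed

definition tensor_ensemble :: "nat \<Rightarrow> nat \<Rightarrow> (real \<times> complex vec) list \<Rightarrow> (real \<times> complex vec) list
    \<Rightarrow> (real \<times> complex vec) list" where
  "tensor_ensemble d1 d2 ps qs = [(p * q, tensor_vec12 d1 d2 u v). (p,u) \<leftarrow> ps, (q,v) \<leftarrow> qs]"

lemma set_tensor_ensemble:
  "set (tensor_ensemble d1 d2 ps qs) = (\<lambda>((p,u),(q,v)). (p * q, tensor_vec12 d1 d2 u v)) ` (set ps \<times> set qs)"
  by (force simp: tensor_ensemble_def)

lemma tensor_ensemble_carrier:
  "snd ` set (tensor_ensemble d1 d2 ps qs) \<subseteq> carrier_vec ((d1 * d2) * (d1 * d2))"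
  by (auto simp: set_tensor_ensemble tensor_vec12_carrier)

lemma mixture_tensor_ensemble:
  assumes ps: "snd ` set ps \<subseteq> carrier_vec (d1 * d1)" and qs: "snd ` set qs \<subseteq> carrier_vec (d2 * d2)"
  shows "mixture ((d1 * d2) * (d1 * d2)) (tensor_ensemble d1 d2 ps qs)
    = tensor12 d1 d2 (mixture (d1 * d1) ps) (mixture (d2 * d2) qs)"
proof (rule sym, rule mixture_eqI[OF tensor12_carrier tensor_ensemble_carrier])
  fix g g' assume g: "g < (d1 * d2) * (d1 * d2)" "g' < (d1 * d2) * (d1 * d2)"
  define x x' y y' where "x = idx1 d1 d2 g" "x' = idx1 d1 d2 g'" "y = idx2 d1 d2 g" "y' = idx2 d1 d2 g'"
  have i: "x < d1 * d1" "x' < d1 * d1" "y < d2 * d2" "y' < d2 * d2"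
    using tensor_index_idx g unfolding x_x'_y_y'_def by auto
  let ?f = "\<lambda>(p, u::complex vec). complex_of_real p * u $ x * cnj (u $ x')"
  let ?h = "\<lambda>(q, v::complex vec). complex_of_real q * v $ y * cnj (v $ y')"
  have "(\<Sum>(p,\<psi>)\<leftarrow>tensor_ensemble d1 d2 ps qs. complex_of_real p * \<psi> $ g * cnj (\<psi> $ g'))
      = (\<Sum>a\<leftarrow>ps. \<Sum>b\<leftarrow>qs. ?f a * ?h b)"
    unfolding tensor_ensemble_def using g
    by (simp add: map_concat sum_list_concat_map comp_def case_prod_unfold index_tensor_vec12
        x_x'_y_y'_def[symmetric] algebra_simps)
  also have "\<dots> = (\<Sum>a\<leftarrow>ps. ?f a) * (\<Sum>b\<leftarrow>qs. ?h b)"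
    by (simp add: sum_list_const_mult sum_list_mult_const)
  also have "\<dots> = tensor12 d1 d2 (mixture (d1 * d1) ps) (mixture (d2 * d2) qs) $$ (g,g')"
    using g i ps qs by (simp add: tensor12_def index_mixture x_x'_y_y'_def case_prod_unfold)
  finally show "tensor12 d1 d2 (mixture (d1 * d1) ps) (mixture (d2 * d2) qs) $$ (g,g')
      = (\<Sum>(p,\<psi>)\<leftarrow>tensor_ensemble d1 d2 ps qs. complex_of_real p * \<psi> $ g * cnj (\<psi> $ g'))" ..
qed

lemma schmidt_rank_tensor_vec12_le:
  fixes f1 g1 f2 g2 :: "nat \<Rightarrow> nat \<Rightarrow> complex"
  assumes u: "\<And>a b. a < d1 \<Longrightarrow> b < d1 \<Longrightarrow> u $ (a * d1 + b) = (\<Sum>r<k1. f1 r a * g1 r b)"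
    and v: "\<And>a b. a < d2 \<Longrightarrow> b < d2 \<Longrightarrow> v $ (a * d2 + b) = (\<Sum>r<k2. f2 r a * g2 r b)"
  shows "schmidt_rank (d1 * d2) (d1 * d2) (tensor_vec12 d1 d2 u v) \<le> k1 * k2"
proof (rule schmidt_rank_le_of_decomposition[OF tensor_vec12_carrier,
      where F = "\<lambda>t a. f1 (t div k2) (a div d2) * f2 (t mod k2) (a mod d2)"
      and G = "\<lambda>t b. g1 (t div k2) (b div d2) * g2 (t mod k2) (b mod d2)"])
  fix a b assume a: "a < d1 * d2" and b: "b < d1 * d2"
  have ab: "a * (d1 * d2) + b < (d1 * d2) * (d1 * d2)" using pair_index_less a b by blast
  have q: "a div d2 < d1" "a mod d2 < d2" "b div d2 < d1" "b mod d2 < d2"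
    using pair_index_div_mod_less a b by auto
  have "idx1 d1 d2 (a * (d1 * d2) + b) = a div d2 * d1 + b div d2"
    "idx2 d1 d2 (a * (d1 * d2) + b) = a mod d2 * d2 + b mod d2"
    unfolding idx1_def idx2_def pair_index_div_mod[OF b] by simp_all
  hence "tensor_vec12 d1 d2 u v $ (a * (d1 * d2) + b)
      = (\<Sum>r<k1. f1 r (a div d2) * g1 r (b div d2)) * (\<Sum>r<k2. f2 r (a mod d2) * g2 r (b mod d2))"
    using q by (simp add: index_tensor_vec12[OF ab] u v)
  also have "\<dots> = (\<Sum>r<k1. \<Sum>r'<k2. f1 r (a div d2) * f2 r' (a mod d2) * (g1 r (b div d2) * g2 r' (b mod d2)))"
    by (simp add: sum_product mult_ac)
  also have "\<dots> = (\<Sum>t<k1 * k2. f1 (t div k2) (a div d2) * f2 (t mod k2) (a mod d2)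
      * (g1 (t div k2) (b div d2) * g2 (t mod k2) (b mod d2)))"
    unfolding sum_pair_index by (intro sum.cong refl) (simp add: pair_index_div_mod)
  finally show "tensor_vec12 d1 d2 u v $ (a * (d1 * d2) + b) = (\<Sum>t<k1 * k2. f1 (t div k2) (a div d2)
      * f2 (t mod k2) (a mod d2) * (g1 (t div k2) (b div d2) * g2 (t mod k2) (b mod d2)))" .
qed

section \<open>Symmetric and antisymmetric projectors\<close>

definition swap_ensemble :: "nat \<Rightarrow> real \<Rightarrow> (real \<times> complex vec) list" where
  "swap_ensemble d s = map (\<lambda>z. (1 / 4, unit_vec (d * d) z + complex_of_real s \<cdot>\<^sub>v unit_vec (d * d) (swap_index d z)))
     [0..<d * d]"

lemma swap_ensemble_carrier: "snd ` set (swap_ensemble d s) \<subseteq> carrier_vec (d * d)"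
  by (auto simp: swap_ensemble_def)

lemma swap_ensemble_weight: "(p,u) \<in> set (swap_ensemble d s) \<Longrightarrow> p = 1 / 4"
  by (auto simp: swap_ensemble_def)

lemma index_mixture_swap_ensemble:
  assumes s: "s * s = 1" and xy: "x < d * d" "y < d * d"
  shows "mixture (d * d) (swap_ensemble d s) $$ (x,y)
    = ((if x = y then 1 else 0) + complex_of_real s * (if y = swap_index d x then 1 else 0)) / 2"
proof -
  let ?\<sigma> = "swap_index d"
  let ?e = "\<lambda>c z. if c = z then 1 else 0 :: complex"
  let ?s = "complex_of_real s"
  have s': "?s * ?s = 1" using s by (metis of_real_1 of_real_mult)
  have "mixture (d * d) (swap_ensemble d s) $$ (x,y)
    = (\<Sum>z<d * d. (?e x z + ?s * ?e (?\<sigma> x) z) * (?e y z + ?s * ?e (?\<sigma> y) z)) / 4"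
    unfolding swap_ensemble_def using xy swap_index_less
    by (subst index_mixture_upt) (auto simp: sum_divide_distrib swap_index_eq_iff if_distrib[of cnj] intro!: sum.cong cong: if_cong)
  also have "\<dots> = (\<Sum>z<d * d. ?e x z * ?e y z + ?s * (?e x z * ?e (?\<sigma> y) z)
      + ?s * (?e (?\<sigma> x) z * ?e y z) + (?s * ?s) * (?e (?\<sigma> x) z * ?e (?\<sigma> y) z)) / 4"
    by (simp add: algebra_simps)
  also have "\<dots> = (?e y x + ?s * ?e (?\<sigma> y) x + ?s * ?e y (?\<sigma> x) + (?s * ?s) * ?e (?\<sigma> y) (?\<sigma> x)) / 4"
    using xy swap_index_less by (simp add: sum.distrib sum_distrib_left[symmetric] sum_indicator_mult)
  also have "?e (?\<sigma> y) x = ?e y (?\<sigma> x)" using swap_index_eq_iff[OF xy(2,1)] by simp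
  also have "?e (?\<sigma> y) (?\<sigma> x) = ?e y x" using swap_index_inj_iff[OF xy(2,1)] by simp
  also have "(?e y x + ?s * ?e y (?\<sigma> x) + ?s * ?e y (?\<sigma> x) + (?s * ?s) * ?e y x) / 4
      = (?e y x + ?s * ?e y (?\<sigma> x)) / 2"
    unfolding s' by (simp add: field_simps)
  finally show ?thesis by (simp add: eq_commute[of y])
qed

lemma swap_ensemble_product_decomposition:
  assumes "(p,u) \<in> set (swap_ensemble d s)"
  obtains f g :: "nat \<Rightarrow> nat \<Rightarrow> complex"
    where "\<And>a b. a < d \<Longrightarrow> b < d \<Longrightarrow> u $ (a * d + b) = (\<Sum>r<2. f r a * g r b)"
proof -
  obtain z where z: "z < d * d" "u = unit_vec (d * d) z + complex_of_real s \<cdot>\<^sub>v unit_vec (d * d) (swap_index d z)"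
    using assms(1) by (auto simp: swap_ensemble_def)
  have q: "z div d < d" "z mod d < d" using pair_index_div_mod_less z(1) by auto
  define f :: "nat \<Rightarrow> nat \<Rightarrow> complex"
    where "f r a = (if r = 0 then of_bool (a = z div d) else complex_of_real s * of_bool (a = z mod d))" for r a
  define g :: "nat \<Rightarrow> nat \<Rightarrow> complex"
    where "g r b = (if r = 0 then of_bool (b = z mod d) else of_bool (b = z div d))" for r b
  have "u $ (a * d + b) = (\<Sum>r<2. f r a * g r b)" if ab: "a < d" "b < d" for a b
  proof -
    have "a * d + b < d * d" using ab pair_index_less by blast
    hence "u $ (a * d + b) = of_bool (a * d + b = z) + complex_of_real s * of_bool (a * d + b = swap_index d z)"
      using z swap_index_less by simp
    also have "a * d + b = z \<longleftrightarrow> a = z div d \<and> b = z mod d"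
      using pair_index_eq_iff[OF ab(2) q(2), of a "z div d"] by simp
    also have "a * d + b = swap_index d z \<longleftrightarrow> a = z mod d \<and> b = z div d"
      unfolding swap_index_def by (rule pair_index_eq_iff[OF ab(2) q(1)])
    also have "of_bool (a = z div d \<and> b = z mod d) + complex_of_real s * of_bool (a = z mod d \<and> b = z div d)
        = f 0 a * g 0 b + f 1 a * g 1 b"
      unfolding f_def g_def by (simp only: of_bool_conj if_True if_False one_neq_zero refl mult.assoc)
    also have "\<dots> = (\<Sum>r<2. f r a * g r b)" by (simp add: numeral_2_eq_2)
    finally show ?thesis .
  qed
  thus thesis by (rule that)
qed

section \<open>The operator Z and its partial transpose\<close>

definition Zop_ensemble :: "nat \<Rightarrow> nat \<Rightarrow> (real \<times> complex vec) list" where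
  "Zop_ensemble d1 d2 =
     tensor_ensemble d1 d2 (orth_ensemble (d1 * d1) (Omega_vec d1)) (orth_ensemble (d2 * d2) (Omega_vec d2))
     @ scale_ensemble ((real d1 - 1) * (real d2 + 1)) (tensor_ensemble d1 d2 [(1, Omega_vec d1)] [(1, Omega_vec d2)])"

lemma Zop_ensemble_carrier: "snd ` set (Zop_ensemble d1 d2) \<subseteq> carrier_vec ((d1 * d2) * (d1 * d2))"
  by (simp add: Zop_ensemble_def set_scale_ensemble tensor_ensemble_carrier image_Un)

lemma ensemble_Zop_ensemble:
  assumes "2 \<le> d1"
  shows "ensemble ((d1 * d2) * (d1 * d2)) (Zop_ensemble d1 d2)"
  using assms Zop_ensemble_carrier[of d1 d2]
  by (force simp: ensemble_def Zop_ensemble_def set_tensor_ensemble scale_ensemble_def orth_ensemble_def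
      tensor_ensemble_def image_iff)

lemma Zop_eq_mixture:
  assumes "d1 > 0" "d2 > 0"
  shows "Zop d1 d2 = mixture ((d1 * d2) * (d1 * d2)) (Zop_ensemble d1 d2)"
proof -
  have Omega: "snd ` set [(1::real, Omega_vec d)] \<subseteq> carrier_vec (d * d)" for d
    using Omega_vec_carrier by auto
  show ?thesis
    unfolding Zop_def Zop_ensemble_def one_minus_omega_eq_mixture[OF assms(1)]
      one_minus_omega_eq_mixture[OF assms(2)]
    unfolding omega_eq_mixture by (simp add: mixture_append tensor_ensemble_carrier set_scale_ensemble mixture_scale_ensemble
        mixture_tensor_ensemble orth_ensemble_carrier Omega_vec_carrier Omega)
qed

lemma psd_Zop:
  assumes "0 < d1" "0 < d2"
  shows "psd ((d1 * d2) * (d1 * d2)) (Zop d1 d2)"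
proof -
  have "\<forall>(p,\<psi>)\<in>set (Zop_ensemble d1 d2). p \<ge> 0"
    using assms by (auto simp: Zop_ensemble_def set_tensor_ensemble scale_ensemble_def orth_ensemble_def)
  moreover have "Zop d1 d2 = mixture ((d1 * d2) * (d1 * d2)) (Zop_ensemble d1 d2)"
    using assms by (rule Zop_eq_mixture)
  ultimately show ?thesis using Zop_ensemble_carrier[of d1 d2] by (auto intro!: psd_mixture)
qed

lemma partial_transpose_Zop:
  "partial_transpose (d1 * d2) (d1 * d2) (Zop d1 d2)
    = tensor12 d1 d2 (partial_transpose d1 d1 (1\<^sub>m (d1 * d1) - omega d1)) (partial_transpose d2 d2 (1\<^sub>m (d2 * d2) - omega d2))
      + complex_of_real ((real d1 - 1) * (real d2 + 1)) \<cdot>\<^sub>m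
        tensor12 d1 d2 (partial_transpose d1 d1 (omega d1)) (partial_transpose d2 d2 (omega d2))"
  unfolding Zop_def
  by (simp add: partial_transpose_add partial_transpose_smult tensor12_carrier partial_transpose_tensor12)

definition sym_sym_weight :: "nat \<Rightarrow> nat \<Rightarrow> real" where
  "sym_sym_weight d1 d2 = (1 - 1 / real d1) * (1 - 1 / real d2) + (real d1 - 1) * (real d2 + 1) / (real d1 * real d2)"

definition anti_sym_weight :: "nat \<Rightarrow> nat \<Rightarrow> real" where
  "anti_sym_weight d1 d2 = 2 * (real d2 - real d1) / (real d1 * real d2)"

definition anti_anti_weight :: "nat \<Rightarrow> nat \<Rightarrow> real" where
  "anti_anti_weight d1 d2 = (1 + 1 / real d1) * (1 + 1 / real d2) + (real d1 - 1) * (real d2 + 1) / (real d1 * real d2)"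

text \<open>Here a and f stand for entries of 1 and of the swap F. In terms of S = (1 + F)/2 and
  A = (1 - F)/2 the coefficient of S \<otimes> A vanishes; this is where the weight (d1 - 1)(d2 + 1) of Z
  comes from.\<close>

lemma partial_transpose_Zop_coefficient_identity:
  fixes a1 f1 a2 f2 D1 D2 :: complex
  assumes "D1 \<noteq> 0" "D2 \<noteq> 0"
  shows "(a1 - f1 / D1) * (a2 - f2 / D2) + (D1 - 1) * (D2 + 1) * (f1 / D1 * (f2 / D2))
   = ((1 - 1 / D1) * (1 - 1 / D2) + (D1 - 1) * (D2 + 1) / (D1 * D2)) * ((a1 + f1) / 2 * ((a2 + f2) / 2))
   + (2 * (D2 - D1) / (D1 * D2)) * ((a1 - f1) / 2 * ((a2 + f2) / 2))
   + ((1 + 1 / D1) * (1 + 1 / D2) + (D1 - 1) * (D2 + 1) / (D1 * D2)) * ((a1 - f1) / 2 * ((a2 - f2) / 2))"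
  using assms by (simp add: field_simps)

lemma partial_transpose_Zop_eq_weighted_sum:
  assumes d: "d1 > 0" "d2 > 0"
  shows "partial_transpose (d1 * d2) (d1 * d2) (Zop d1 d2)
    = complex_of_real (sym_sym_weight d1 d2) \<cdot>\<^sub>m
        tensor12 d1 d2 (mixture (d1 * d1) (swap_ensemble d1 1)) (mixture (d2 * d2) (swap_ensemble d2 1))
      + (complex_of_real (anti_sym_weight d1 d2) \<cdot>\<^sub>m
        tensor12 d1 d2 (mixture (d1 * d1) (swap_ensemble d1 (-1))) (mixture (d2 * d2) (swap_ensemble d2 1))
      + complex_of_real (anti_anti_weight d1 d2) \<cdot>\<^sub>m
        tensor12 d1 d2 (mixture (d1 * d1) (swap_ensemble d1 (-1))) (mixture (d2 * d2) (swap_ensemble d2 (-1))))"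
    (is "_ = ?R")
proof (rule eq_matI)
  fix g g' assume "g < dim_row ?R" "g' < dim_col ?R"
  hence g: "g < (d1 * d2) * (d1 * d2)" "g' < (d1 * d2) * (d1 * d2)" by (simp_all add: tensor12_def)
  define x x' y y' where "x = idx1 d1 d2 g" "x' = idx1 d1 d2 g'" "y = idx2 d1 d2 g" "y' = idx2 d1 d2 g'"
  have i: "x < d1 * d1" "x' < d1 * d1" "y < d2 * d2" "y' < d2 * d2"
    using tensor_index_idx g unfolding x_x'_y_y'_def by auto
  define a1 f1 a2 f2 :: complex where
    "a1 = (if x = x' then 1 else 0)" "f1 = (if x' = swap_index d1 x then 1 else 0)"
    "a2 = (if y = y' then 1 else 0)" "f2 = (if y' = swap_index d2 y then 1 else 0)"
  have pt: "partial_transpose d1 d1 (1\<^sub>m (d1 * d1) - omega d1) $$ (x,x') = a1 - f1 / of_nat d1"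
    "partial_transpose d2 d2 (1\<^sub>m (d2 * d2) - omega d2) $$ (y,y') = a2 - f2 / of_nat d2"
    "partial_transpose d1 d1 (omega d1) $$ (x,x') = f1 / of_nat d1"
    "partial_transpose d2 d2 (omega d2) $$ (y,y') = f2 / of_nat d2"
    using i by (simp_all add: index_partial_transpose_one_minus_omega index_partial_transpose_omega
        a1_f1_a2_f2_def)
  have sw: "mixture (d1 * d1) (swap_ensemble d1 1) $$ (x,x') = (a1 + f1) / 2"
    "mixture (d2 * d2) (swap_ensemble d2 1) $$ (y,y') = (a2 + f2) / 2"
    "mixture (d1 * d1) (swap_ensemble d1 (-1)) $$ (x,x') = (a1 - f1) / 2"
    "mixture (d2 * d2) (swap_ensemble d2 (-1)) $$ (y,y') = (a2 - f2) / 2"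
    using i by (simp_all add: index_mixture_swap_ensemble a1_f1_a2_f2_def)
  show "partial_transpose (d1 * d2) (d1 * d2) (Zop d1 d2) $$ (g,g') = ?R $$ (g,g')"
    using g d partial_transpose_Zop_coefficient_identity[of "of_nat d1" "of_nat d2" a1 f1 a2 f2]
    by (simp add: partial_transpose_Zop tensor12_def x_x'_y_y'_def[symmetric] pt sw
        sym_sym_weight_def anti_sym_weight_def anti_anti_weight_def)
qed (simp_all add: partial_transpose_def tensor12_def)

definition partial_transpose_Zop_ensemble :: "nat \<Rightarrow> nat \<Rightarrow> (real \<times> complex vec) list" where
  "partial_transpose_Zop_ensemble d1 d2 =
     scale_ensemble (sym_sym_weight d1 d2) (tensor_ensemble d1 d2 (swap_ensemble d1 1) (swap_ensemble d2 1))
   @ scale_ensemble (anti_sym_weight d1 d2) (tensor_ensemble d1 d2 (swap_ensemble d1 (-1)) (swap_ensemble d2 1))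
   @ scale_ensemble (anti_anti_weight d1 d2) (tensor_ensemble d1 d2 (swap_ensemble d1 (-1)) (swap_ensemble d2 (-1)))"

lemma partial_transpose_Zop_ensemble_carrier:
  "snd ` set (partial_transpose_Zop_ensemble d1 d2) \<subseteq> carrier_vec ((d1 * d2) * (d1 * d2))"
  by (simp add: partial_transpose_Zop_ensemble_def set_scale_ensemble tensor_ensemble_carrier image_Un)

lemma partial_transpose_Zop_eq_mixture:
  assumes "d1 > 0" "d2 > 0"
  shows "partial_transpose (d1 * d2) (d1 * d2) (Zop d1 d2) = mixture ((d1 * d2) * (d1 * d2)) (partial_transpose_Zop_ensemble d1 d2)"
  unfolding partial_transpose_Zop_eq_weighted_sum[OF assms] partial_transpose_Zop_ensemble_def
  by (simp add: mixture_append tensor_ensemble_carrier set_scale_ensemble mixture_scale_ensemble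
      mixture_tensor_ensemble swap_ensemble_carrier image_Un)

lemma mem_scale_tensor_swap_ensemble:
  assumes "(p,\<psi>) \<in> set (scale_ensemble c (tensor_ensemble d1 d2 (swap_ensemble d1 s1) (swap_ensemble d2 s2)))"
  shows "p = c / 16" "schmidt_rank (d1 * d2) (d1 * d2) \<psi> \<le> 4"
proof -
  obtain p1 p2 u v where p: "p = c * (p1 * p2)" and \<psi>: "\<psi> = tensor_vec12 d1 d2 u v"
    and u: "(p1, u) \<in> set (swap_ensemble d1 s1)" and v: "(p2, v) \<in> set (swap_ensemble d2 s2)"
    using assms by (auto simp: set_scale_ensemble_weights set_tensor_ensemble)
  show "p = c / 16" using p swap_ensemble_weight[OF u] swap_ensemble_weight[OF v] by simp
  obtain f1 g1 :: "nat \<Rightarrow> nat \<Rightarrow> complex"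
    where "\<And>a b. a < d1 \<Longrightarrow> b < d1 \<Longrightarrow> u $ (a * d1 + b) = (\<Sum>r<2. f1 r a * g1 r b)"
    using swap_ensemble_product_decomposition[OF u] by blast
  moreover obtain f2 g2 :: "nat \<Rightarrow> nat \<Rightarrow> complex"
    where "\<And>a b. a < d2 \<Longrightarrow> b < d2 \<Longrightarrow> v $ (a * d2 + b) = (\<Sum>r<2. f2 r a * g2 r b)"
    using swap_ensemble_product_decomposition[OF v] by blast
  ultimately have "schmidt_rank (d1 * d2) (d1 * d2) \<psi> \<le> 2 * 2"
    unfolding \<psi> by (rule schmidt_rank_tensor_vec12_le)
  thus "schmidt_rank (d1 * d2) (d1 * d2) \<psi> \<le> 4" by simp
qed

lemma partial_transpose_Zop_ensemble_nonneg:
  assumes "0 < d1" "d1 \<le> d2"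
  shows "\<forall>(p,\<psi>)\<in>set (partial_transpose_Zop_ensemble d1 d2).
    p \<ge> 0 \<and> \<psi> \<in> carrier_vec ((d1 * d2) * (d1 * d2))"
proof -
  have d: "1 \<le> real d1" "real d1 \<le> real d2" using assms by auto
  have "0 \<le> sym_sym_weight d1 d2" "0 \<le> anti_sym_weight d1 d2" "0 \<le> anti_anti_weight d1 d2"
    using d by (simp_all add: sym_sym_weight_def anti_sym_weight_def anti_anti_weight_def)
  hence "p \<ge> 0" if "(p,\<psi>) \<in> set (partial_transpose_Zop_ensemble d1 d2)" for p \<psi>
    using that unfolding partial_transpose_Zop_ensemble_def set_append Un_iff
    by (elim disjE) (drule mem_scale_tensor_swap_ensemble(1), simp)+
  thus ?thesis using partial_transpose_Zop_ensemble_carrier[of d1 d2] by (force simp: image_iff)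
qed

lemma schmidt_rank_partial_transpose_Zop_ensemble_le:
  "(p,\<psi>) \<in> set (partial_transpose_Zop_ensemble d1 d2) \<Longrightarrow> schmidt_rank (d1 * d2) (d1 * d2) \<psi> \<le> 4"
  unfolding partial_transpose_Zop_ensemble_def set_append Un_iff by (elim disjE) (erule mem_scale_tensor_swap_ensemble(2))+

lemma PPT_Zop:
  assumes "0 < d1" "d1 \<le> d2"
  shows "PPT (d1 * d2) (d1 * d2) (Zop d1 d2)"
  unfolding PPT_def partial_transpose_Zop_eq_mixture[OF assms(1) order.strict_trans2[OF assms]]
  using partial_transpose_Zop_ensemble_nonneg[OF assms] by (intro psd_mixture) auto

lemma SN_partial_transpose_Zop_le:
  assumes "0 < d1" "d1 \<le> d2"
  shows "SN (d1 * d2) (d1 * d2) (partial_transpose (d1 * d2) (d1 * d2) (Zop d1 d2)) \<le> 4"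
proof (rule SN_le)
  let ?ps = "filter (\<lambda>x. fst x > 0) (partial_transpose_Zop_ensemble d1 d2)"
  note nonneg = partial_transpose_Zop_ensemble_nonneg[OF assms]
  show "partial_transpose (d1 * d2) (d1 * d2) (Zop d1 d2) = mixture ((d1 * d2) * (d1 * d2)) ?ps"
    using partial_transpose_Zop_eq_mixture[OF assms(1) order.strict_trans2[OF assms]]
      mixture_filter_pos[OF nonneg] by simp
  show "ensemble ((d1 * d2) * (d1 * d2)) ?ps" by (rule ensemble_filter_pos[OF nonneg])
  show "\<forall>(p,\<psi>)\<in>set ?ps. schmidt_rank (d1 * d2) (d1 * d2) \<psi> \<le> 4"
    using schmidt_rank_partial_transpose_Zop_ensemble_le by auto
qed

section \<open>Lower bound on the Schmidt number of Z\<close>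

lemma quadratic_form_Zop_Omega:
  assumes d: "d1 > 0" "d2 > 0" and x: "x \<in> carrier_vec (d2 * d2)"
    and Z: "Zop d1 d2 = mixture ((d1 * d2) * (d1 * d2)) ps" "snd ` set ps \<subseteq> carrier_vec ((d1 * d2) * (d1 * d2))"
  shows "(\<Sum>(p,\<psi>)\<leftarrow>ps. p * (cmod (conjugate \<psi> \<bullet> tensor_vec12 d1 d2 (Omega_vec d1) x))\<^sup>2)
    = (real d1 - 1) * (real d2 + 1) * (cmod (conjugate (Omega_vec d2) \<bullet> x))\<^sup>2"
proof -
  let ?w = "tensor_vec12 d1 d2 (Omega_vec d1) x"
  let ?f = "\<lambda>(p,\<psi>). p * (cmod (conjugate \<psi> \<bullet> ?w))\<^sup>2"
  have "complex_of_real (sum_list (map ?f ps)) = conjugate ?w \<bullet> (Zop d1 d2 *\<^sub>v ?w)"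
    using Z tensor_vec12_carrier by (simp add: quadratic_form_mixture)
  also have "\<dots> = complex_of_real (sum_list (map ?f (Zop_ensemble d1 d2)))"
    using Zop_eq_mixture[OF d] Zop_ensemble_carrier tensor_vec12_carrier
    by (simp add: quadratic_form_mixture)
  finally have ps: "sum_list (map ?f ps) = sum_list (map ?f (Zop_ensemble d1 d2))"
    by (simp only: of_real_eq_iff)
  have "sum_list (map ?f (tensor_ensemble d1 d2 (orth_ensemble (d1 * d1) (Omega_vec d1))
      (orth_ensemble (d2 * d2) (Omega_vec d2)))) = 0"
  proof (rule sum_list_map_eq_0)
    fix y assume "y \<in> set (tensor_ensemble d1 d2 (orth_ensemble (d1 * d1) (Omega_vec d1))
      (orth_ensemble (d2 * d2) (Omega_vec d2)))"
    then obtain p q \<nu> \<nu>' where y: "y = (p * q, tensor_vec12 d1 d2 \<nu> \<nu>')"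
      and \<nu>: "\<nu> \<in> snd ` set (orth_ensemble (d1 * d1) (Omega_vec d1))"
      and \<nu>': "\<nu>' \<in> snd ` set (orth_ensemble (d2 * d2) (Omega_vec d2))"
      by (force simp: set_tensor_ensemble)
    have "conjugate \<nu> \<bullet> Omega_vec d1 = 0"
      by (rule orth_ensemble_orthogonal[OF Omega_vec_carrier cscalar_prod_Omega_vec[OF d(1)] \<nu>])
    moreover have "\<nu> \<in> carrier_vec (d1 * d1)" "\<nu>' \<in> carrier_vec (d2 * d2)"
      using \<nu> \<nu>' orth_ensemble_carrier[OF Omega_vec_carrier] by blast+
    ultimately show "?f y = 0" using y x by (simp add: cscalar_prod_tensor_vec12 Omega_vec_carrier)
  qed
  moreover have "sum_list (map ?f (scale_ensemble ((real d1 - 1) * (real d2 + 1))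
      (tensor_ensemble d1 d2 [(1, Omega_vec d1)] [(1, Omega_vec d2)])))
    = (real d1 - 1) * (real d2 + 1) * (cmod (conjugate (Omega_vec d2) \<bullet> x))\<^sup>2"
    using x by (simp add: scale_ensemble_def tensor_ensemble_def cscalar_prod_tensor_vec12 Omega_vec_carrier
        cscalar_prod_Omega_vec[OF d(1)])
  ultimately show ?thesis unfolding ps by (simp add: Zop_ensemble_def)
qed

text \<open>Up to the factor 1 / sqrt d1 and complex conjugation, the coefficients of the partial inner
  product of \<psi> with \<Omega>_d1 on A1B1, a vector on A2B2.\<close>

definition Omega_contraction :: "nat \<Rightarrow> nat \<Rightarrow> complex vec \<Rightarrow> nat \<Rightarrow> complex" where
  "Omega_contraction d1 d2 \<psi> y = (\<Sum>i<d1. cnj (\<psi> $ tensor_index d1 d2 (i * d1 + i) y))"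

lemma cscalar_prod_tensor_Omega:
  assumes \<psi>: "\<psi> \<in> carrier_vec ((d1 * d2) * (d1 * d2))" and x: "x \<in> carrier_vec (d2 * d2)"
  shows "conjugate \<psi> \<bullet> tensor_vec12 d1 d2 (Omega_vec d1) x
    = complex_of_real (1 / sqrt (real d1)) * (\<Sum>y<d2 * d2. Omega_contraction d1 d2 \<psi> y * x $ y)"
proof -
  have "conjugate \<psi> \<bullet> tensor_vec12 d1 d2 (Omega_vec d1) x
      = (\<Sum>g<(d1 * d2) * (d1 * d2). cnj (\<psi> $ g) * tensor_vec12 d1 d2 (Omega_vec d1) x $ g)"
    by (rule cscalar_prod_eq_sum[OF \<psi> tensor_vec12_carrier])
  also have "\<dots> = (\<Sum>z<d1 * d1. \<Sum>y<d2 * d2. cnj (\<psi> $ tensor_index d1 d2 z y) * (Omega_vec d1 $ z * x $ y))"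
    unfolding sum_tensor_index
  proof (intro sum.cong refl)
    fix z y assume "z \<in> {..<d1 * d1}" "y \<in> {..<d2 * d2}"
    hence zy: "z < d1 * d1" "y < d2 * d2" by auto
    show "cnj (\<psi> $ tensor_index d1 d2 z y) * tensor_vec12 d1 d2 (Omega_vec d1) x $ tensor_index d1 d2 z y
      = cnj (\<psi> $ tensor_index d1 d2 z y) * (Omega_vec d1 $ z * x $ y)"
      by (simp add: index_tensor_vec12[OF idx_tensor_index(3)[OF zy]] idx_tensor_index[OF zy])
  qed
  also have "\<dots> = (\<Sum>y<d2 * d2. \<Sum>z<d1 * d1. cnj (\<psi> $ tensor_index d1 d2 z y) * (Omega_vec d1 $ z * x $ y))"
    by (rule sum.swap)
  also have "\<dots> = (\<Sum>y<d2 * d2. complex_of_real (1 / sqrt (real d1)) * (Omega_contraction d1 d2 \<psi> y * x $ y))"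
  proof (rule sum.cong[OF refl])
    fix y
    have "(\<Sum>z<d1 * d1. cnj (\<psi> $ tensor_index d1 d2 z y) * (Omega_vec d1 $ z * x $ y))
      = (\<Sum>a<d1. \<Sum>b<d1. (if a = b then 1 else 0) *
          (cnj (\<psi> $ tensor_index d1 d2 (a * d1 + b) y) * (complex_of_real (1 / sqrt (real d1)) * x $ y)))"
      unfolding sum_pair_index
      by (intro sum.cong refl) (simp add: index_Omega_vec pair_index_less on_diagonal_pair_index)
    also have "\<dots> = (\<Sum>a<d1. cnj (\<psi> $ tensor_index d1 d2 (a * d1 + a) y)
        * (complex_of_real (1 / sqrt (real d1)) * x $ y))"
      by (intro sum.cong refl) (rule sum_indicator_mult, simp)
    also have "\<dots> = complex_of_real (1 / sqrt (real d1)) * (Omega_contraction d1 d2 \<psi> y * x $ y)"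
      unfolding Omega_contraction_def by (simp add: sum_distrib_left sum_distrib_right mult_ac)
    finally show "(\<Sum>z<d1 * d1. cnj (\<psi> $ tensor_index d1 d2 z y) * (Omega_vec d1 $ z * x $ y))
      = complex_of_real (1 / sqrt (real d1)) * (Omega_contraction d1 d2 \<psi> y * x $ y)" .
  qed
  finally show ?thesis by (simp add: sum_distrib_left)
qed

lemma Omega_orthogonal_functional_diagonal:
  fixes C :: "nat \<Rightarrow> complex"
  assumes orth: "\<And>x. x \<in> carrier_vec (d * d) \<Longrightarrow> conjugate (Omega_vec d) \<bullet> x = 0 \<Longrightarrow>
      (\<Sum>y<d * d. C y * x $ y) = 0"
    and ab: "a < d" "b < d"
  shows "C (a * d + b) = (if a = b then C 0 else 0)"
proof -
  have ab_lt: "a * d + b < d * d" "a * d + a < d * d" and zero_lt: "0 < d * d"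
    using ab pair_index_less by auto
  have C_eq: "C y1 - C y2 = 0" if "y1 < d * d" "y2 < d * d" "Omega_vec d $ y1 = Omega_vec d $ y2" for y1 y2
  proof -
    have "conjugate (Omega_vec d) \<bullet> (unit_vec (d * d) y1 - unit_vec (d * d) y2) = 0"
      using that Omega_vec_carrier[of d] by (simp add: scalar_prod_minus_distrib[of _ "d * d"])
    hence "(\<Sum>y<d * d. C y * (unit_vec (d * d) y1 - unit_vec (d * d) y2) $ y) = 0" by (intro orth) simp
    thus ?thesis using that by (simp add: algebra_simps sum_subtractf sum_mult_indicator)
  qed
  show ?thesis
  proof (cases "a = b")
    case True
    have "Omega_vec d $ (a * d + a) = Omega_vec d $ 0"
      using ab_lt zero_lt ab by (simp add: index_Omega_vec on_diagonal_def pair_index_div_mod)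
    thus ?thesis using C_eq[OF ab_lt(2) zero_lt] True by simp
  next
    case False
    have "conjugate (Omega_vec d) \<bullet> unit_vec (d * d) (a * d + b) = 0"
      using ab_lt False ab Omega_vec_carrier[of d] by (simp add: index_Omega_vec on_diagonal_pair_index)
    hence "(\<Sum>y<d * d. C y * unit_vec (d * d) (a * d + b) $ y) = 0" by (intro orth) simp
    thus ?thesis using ab_lt False by (simp add: sum_mult_indicator)
  qed
qed

lemma rank_Omega_contraction_le:
  assumes \<psi>: "\<psi> \<in> carrier_vec ((d1 * d2) * (d1 * d2))"
  shows "vec_space.rank d2 (mat d2 d2 (\<lambda>(a,b). Omega_contraction d1 d2 \<psi> (a * d2 + b)))
    \<le> d1 * schmidt_rank (d1 * d2) (d1 * d2) \<psi>"
proof -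
  define D where "D = d1 * d2"
  define M where "M i = mat d2 d2 (\<lambda>(a,b). cnj (\<psi> $ ((i * d2 + a) * D + (i * d2 + b))))" for i
  define R where "R i = mat d2 D (\<lambda>(a,b). cnj (\<psi> $ ((i * d2 + a) * D + b)))" for i
  have "mat d2 d2 (\<lambda>(a,b). Omega_contraction d1 d2 \<psi> (a * d2 + b))
      = mat d2 d2 (\<lambda>(a,b). \<Sum>i<d1. cnj (\<psi> $ ((i * d2 + a) * D + (i * d2 + b))))"
    by (rule eq_matI) (auto simp: Omega_contraction_def tensor_index_diagonal D_def)
  hence "vec_space.rank d2 (mat d2 d2 (\<lambda>(a,b). Omega_contraction d1 d2 \<psi> (a * d2 + b)))
      \<le> (\<Sum>i<d1. vec_space.rank d2 (M i))"
    unfolding M_def by (simp add: rank_mat_sum_le)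
  also have "\<dots> \<le> (\<Sum>i<d1. schmidt_rank (d1 * d2) (d1 * d2) \<psi>)"
  proof (rule sum_mono)
    fix i assume "i \<in> {..<d1}"
    hence i: "i < d1" by simp
    have "set (cols (M i)) \<subseteq> set (cols (R i))"
    proof
      fix c assume "c \<in> set (cols (M i))"
      then obtain b where b: "b < d2" "c = col (M i) b" by (auto simp: M_def in_set_conv_nth)
      have ib: "i * d2 + b < D" unfolding D_def using pair_index_less i b by blast
      have "c = col (R i) (i * d2 + b)" using b ib by (auto simp: M_def R_def)
      thus "c \<in> set (cols (R i))" using ib by (auto simp: R_def in_set_conv_nth)
    qed
    hence "vec_space.rank d2 (M i) \<le> vec_space.rank d2 (R i)"
      by (intro vec_space.rank_le_of_cols_subset) (auto simp: M_def R_def)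
    also have "\<dots> \<le> schmidt_rank (d1 * d2) (d1 * d2) \<psi>"
      unfolding R_def D_def using \<psi> i pair_index_less by (intro rank_rows_le_schmidt_rank) auto
    finally show "vec_space.rank d2 (M i) \<le> schmidt_rank (d1 * d2) (d1 * d2) \<psi>" .
  qed
  finally show ?thesis by simp
qed

lemma Zop_decomposition_Omega_overlap:
  assumes d: "2 \<le> d1" "0 < d2"
    and Z: "Zop d1 d2 = mixture ((d1 * d2) * (d1 * d2)) ps" and ps: "ensemble ((d1 * d2) * (d1 * d2)) ps"
  shows "\<And>p \<psi> x. (p,\<psi>) \<in> set ps \<Longrightarrow> x \<in> carrier_vec (d2 * d2) \<Longrightarrow>
      conjugate (Omega_vec d2) \<bullet> x = 0 \<Longrightarrow>
      conjugate \<psi> \<bullet> tensor_vec12 d1 d2 (Omega_vec d1) x = 0"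
    and "\<exists>(p,\<psi>)\<in>set ps. conjugate \<psi> \<bullet> tensor_vec12 d1 d2 (Omega_vec d1) (Omega_vec d2) \<noteq> 0"
proof -
  let ?c = "(real d1 - 1) * (real d2 + 1)"
  let ?f = "\<lambda>x (p, \<psi>). p * (cmod (conjugate \<psi> \<bullet> tensor_vec12 d1 d2 (Omega_vec d1) x))\<^sup>2"
  have carrier: "snd ` set ps \<subseteq> carrier_vec ((d1 * d2) * (d1 * d2))" using ps by (force simp: ensemble_def)
  have qf: "sum_list (map (?f x) ps) = ?c * (cmod (conjugate (Omega_vec d2) \<bullet> x))\<^sup>2"
    if "x \<in> carrier_vec (d2 * d2)" for x
    using quadratic_form_Zop_Omega[OF _ d(2) that Z carrier] d(1) by simp
  have nonneg: "\<And>y. y \<in> set (map (?f x) ps) \<Longrightarrow> 0 \<le> y" for x using ps by (auto simp: ensemble_def)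
  show "conjugate \<psi> \<bullet> tensor_vec12 d1 d2 (Omega_vec d1) x = 0"
    if "(p,\<psi>) \<in> set ps" "x \<in> carrier_vec (d2 * d2)" "conjugate (Omega_vec d2) \<bullet> x = 0" for p \<psi> x
  proof -
    have "sum_list (map (?f x) ps) = 0" using qf that(2,3) by simp
    hence "?f x (p,\<psi>) = 0" using that(1) sum_list_nonneg_eq_0_iff[OF nonneg] by fastforce
    moreover have "p > 0" using ps that(1) by (auto simp: ensemble_def)
    ultimately show ?thesis by simp
  qed
  show "\<exists>(p,\<psi>)\<in>set ps. conjugate \<psi> \<bullet> tensor_vec12 d1 d2 (Omega_vec d1) (Omega_vec d2) \<noteq> 0"
  proof (rule ccontr)
    assume "\<not> ?thesis"
    hence "sum_list (map (?f (Omega_vec d2)) ps) = 0" by (intro sum_list_map_eq_0) auto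
    moreover have "sum_list (map (?f (Omega_vec d2)) ps) = ?c"
      using qf[OF Omega_vec_carrier] cscalar_prod_Omega_vec[OF d(2)] by simp
    moreover have "?c > 0" using d by simp
    ultimately show False by simp
  qed
qed

lemma schmidt_rank_ge_of_Omega_overlap:
  assumes d: "0 < d1" "0 < d2" and \<psi>: "\<psi> \<in> carrier_vec ((d1 * d2) * (d1 * d2))"
    and orth: "\<And>x. x \<in> carrier_vec (d2 * d2) \<Longrightarrow> conjugate (Omega_vec d2) \<bullet> x = 0 \<Longrightarrow>
      conjugate \<psi> \<bullet> tensor_vec12 d1 d2 (Omega_vec d1) x = 0"
    and overlap: "conjugate \<psi> \<bullet> tensor_vec12 d1 d2 (Omega_vec d1) (Omega_vec d2) \<noteq> 0"
  shows "d2 \<le> d1 * schmidt_rank (d1 * d2) (d1 * d2) \<psi>"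
proof -
  let ?C = "Omega_contraction d1 d2 \<psi>"
  have scale: "complex_of_real (1 / sqrt (real d1)) \<noteq> 0" using d by simp
  have C_diag: "?C (a * d2 + b) = (if a = b then ?C 0 else 0)" if "a < d2" "b < d2" for a b
  proof (rule Omega_orthogonal_functional_diagonal[OF _ that])
    fix x :: "complex vec" assume "x \<in> carrier_vec (d2 * d2)" "conjugate (Omega_vec d2) \<bullet> x = 0"
    thus "(\<Sum>y<d2 * d2. ?C y * x $ y) = 0"
      using orth cscalar_prod_tensor_Omega[OF \<psi>] scale by fastforce
  qed
  have "?C 0 \<noteq> 0"
  proof
    assume "?C 0 = 0"
    hence "?C y = 0" if "y < d2 * d2" for y
      using C_diag[of "y div d2" "y mod d2"] pair_index_div_mod_less[OF that] by simp
    hence "conjugate \<psi> \<bullet> tensor_vec12 d1 d2 (Omega_vec d1) (Omega_vec d2) = 0"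
      by (simp add: cscalar_prod_tensor_Omega[OF \<psi> Omega_vec_carrier])
    thus False using overlap by contradiction
  qed
  have "mat d2 d2 (\<lambda>(a,b). ?C (a * d2 + b)) = ?C 0 \<cdot>\<^sub>m 1\<^sub>m d2"
    by (rule eq_matI) (auto simp: C_diag)
  hence "d2 = vec_space.rank d2 (mat d2 d2 (\<lambda>(a,b). ?C (a * d2 + b)))"
    using rank_smult_one_mat[OF \<open>?C 0 \<noteq> 0\<close>] by simp
  also have "\<dots> \<le> d1 * schmidt_rank (d1 * d2) (d1 * d2) \<psi>" by (rule rank_Omega_contraction_le[OF \<psi>])
  finally show ?thesis .
qed

lemma SN_Zop_ge:
  assumes "2 \<le> d1" "0 < d2"
  shows "d2 \<le> d1 * SN (d1 * d2) (d1 * d2) (Zop d1 d2)"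
proof -
  have "Zop d1 d2 = mixture ((d1 * d2) * (d1 * d2)) (Zop_ensemble d1 d2)"
    using assms by (intro Zop_eq_mixture) auto
  then obtain ps where Z: "Zop d1 d2 = mixture ((d1 * d2) * (d1 * d2)) ps"
    and ps: "ensemble ((d1 * d2) * (d1 * d2)) ps"
    and rank: "\<forall>(p,\<psi>)\<in>set ps. schmidt_rank (d1 * d2) (d1 * d2) \<psi> \<le> SN (d1 * d2) (d1 * d2) (Zop d1 d2)"
    using SN_attained ensemble_Zop_ensemble[OF assms(1)] by metis
  obtain p \<psi> where p\<psi>: "(p,\<psi>) \<in> set ps"
    and overlap: "conjugate \<psi> \<bullet> tensor_vec12 d1 d2 (Omega_vec d1) (Omega_vec d2) \<noteq> 0"
    using Zop_decomposition_Omega_overlap(2)[OF assms Z ps] by auto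
  have "\<psi> \<in> carrier_vec ((d1 * d2) * (d1 * d2))" using ps p\<psi> by (auto simp: ensemble_def)
  hence "d2 \<le> d1 * schmidt_rank (d1 * d2) (d1 * d2) \<psi>"
    using assms Zop_decomposition_Omega_overlap(1)[OF assms Z ps p\<psi>] overlap
    by (intro schmidt_rank_ge_of_Omega_overlap) auto
  also have "\<dots> \<le> d1 * SN (d1 * d2) (d1 * d2) (Zop d1 d2)" using rank p\<psi> by auto
  finally show ?thesis .
qed

theorem theorem7:
  fixes d1 d2 :: nat
  assumes "2 \<le> d1" and "d1 \<le> d2"
  shows "psd ((d1*d2)*(d1*d2)) (Zop d1 d2)
    \<and> PPT (d1*d2) (d1*d2) (Zop d1 d2)
    \<and> SN (d1*d2) (d1*d2) (partial_transpose (d1*d2) (d1*d2) (Zop d1 d2)) \<le> 4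
    \<and> int (SN (d1*d2) (d1*d2) (Zop d1 d2))
        - int (SN (d1*d2) (d1*d2) (partial_transpose (d1*d2) (d1*d2) (Zop d1 d2)))
      \<ge> \<lceil>real d2 / real d1\<rceil> - 4"
proof -
  have d: "0 < d1" "0 < d2" using assms by auto
  have SN_pt: "SN (d1*d2) (d1*d2) (partial_transpose (d1*d2) (d1*d2) (Zop d1 d2)) \<le> 4"
    by (rule SN_partial_transpose_Zop_le[OF d(1) assms(2)])
  have "real d2 \<le> real d1 * real (SN (d1*d2) (d1*d2) (Zop d1 d2))"
    using SN_Zop_ge[OF assms(1) d(2)] by (metis of_nat_le_iff of_nat_mult)
  hence "\<lceil>real d2 / real d1\<rceil> \<le> int (SN (d1*d2) (d1*d2) (Zop d1 d2))"
    using d by (simp add: ceiling_le_iff divide_le_eq mult.commute)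
  thus ?thesis using psd_Zop[OF d] PPT_Zop[OF d(1) assms(2)] SN_pt by linarith
qed

end
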